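(* Let $\mathcal A\in\mathbb R^{n\times p\times l}$ with $n\ge p$. Then $\mathcal A$ can be written as $\mathcal A=\mathcal P*\mathcal H$ with $\mathcal P\in\mathrm{St}(n,p,l)$ and $\mathcal H\in\mathbb R^{p\times p\times l}$ symmetric t-positive semidefinite, and $\mathcal H$ is unique. Furthermore, if $\mathcal A^\top*\mathcal A$ is symmetric t-positive definite, then $\mathcal P$ is unique and $\mathcal H$ is symmetric t-positive definite.
   Context: Frontal slices $A^{(i)}=\mathcal A(:,:,i)$. The t-product is $\mathcal A*\mathcal B=\operatorname{fold}(\operatorname{bcirc}(\mathcal A)\operatorname{unfold}(\mathcal B))$, where $\operatorname{bcirc}(\mathcal A)$ is the block circulant matrix with $(i,j)$ block $A^{(((i-j)\bmod l)+1)}$, $\operatorname{unfold}$ stacks frontal slices vertically, $\operatorname{fold}$ is its inverse. Transpose: $\mathcal A^\top$ has frontal slices $(A^{(1)})^\top,(A^{(l)})^\top,\dots,(A^{(2)})^\top$. $\mathcal I$ identity tensor. $\mathrm{St}(n,p,l)=\{\mathcal X\in\mathbb R^{n\times p\times l}:\mathcal X^\top*\mathcal X=\mathcal I\}$. A tensor $\mathcal H\in\mathbb R^{p\times p\times l}$ is symmetric if $\mathcal H^\top=\mathcal H$; a symmetric $\mathcal H$ is t-positive semidefinite (definite) if $\langle\mathcal Z,\mathcal H*\mathcal Z\rangle\ge0$ ($>0$) for all (nonzero) $\mathcal Z\in\mathbb R^{p\times1\times l}$, where $\langle\cdot,\cdot\rangle$ is the entrywise inner product. *)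

theory Defs
  imports Complex_Main
begin

text \<open>Third-order real tensors are represented as functions of three natural
indices (0-based: row, column, frontal slice).\<close>

type_synonym tensor = "nat \<Rightarrow> nat \<Rightarrow> nat \<Rightarrow> real"

definition is_tensor :: "nat \<Rightarrow> nat \<Rightarrow> nat \<Rightarrow> tensor \<Rightarrow> bool" where
  "is_tensor n p l A \<longleftrightarrow> (\<forall>i j k. (n \<le> i \<or> p \<le> j \<or> l \<le> k) \<longrightarrow> A i j k = 0)"

text \<open>t-product of A (n x p x l) and B (p x q x l): frontal slice k of the result is
  sum over t of A^((k-t) mod l) B^(t), i.e. fold (bcirc A * unfold B).\<close>
definition tprod :: "nat \<Rightarrow> nat \<Rightarrow> tensor \<Rightarrow> tensor \<Rightarrow> tensor" where
  "tprod p l A B = (\<lambda>i j k. if k < l then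
      (\<Sum>t<l. \<Sum>m<p. A i m ((k + l - t) mod l) * B m j t) else 0)"

definition ttrans :: "nat \<Rightarrow> tensor \<Rightarrow> tensor" where
  "ttrans l A = (\<lambda>i j k. if k < l then A j i ((l - k) mod l) else 0)"

definition tid :: "nat \<Rightarrow> tensor" where
  "tid p = (\<lambda>i j k. if i = j \<and> i < p \<and> k = 0 then 1 else 0)"

definition tinner :: "nat \<Rightarrow> nat \<Rightarrow> nat \<Rightarrow> tensor \<Rightarrow> tensor \<Rightarrow> real" where
  "tinner n p l A B = (\<Sum>i<n. \<Sum>j<p. \<Sum>k<l. A i j k * B i j k)"

definition Stiefel :: "nat \<Rightarrow> nat \<Rightarrow> nat \<Rightarrow> tensor set" where
  "Stiefel n p l = {X. is_tensor n p l X \<and> tprod n l (ttrans l X) X = tid p}"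

definition tsym :: "nat \<Rightarrow> nat \<Rightarrow> tensor \<Rightarrow> bool" where
  "tsym p l H \<longleftrightarrow> is_tensor p p l H \<and> ttrans l H = H"

definition t_psd :: "nat \<Rightarrow> nat \<Rightarrow> tensor \<Rightarrow> bool" where
  "t_psd p l H \<longleftrightarrow> tsym p l H \<and>
     (\<forall>Z. is_tensor p 1 l Z \<longrightarrow> 0 \<le> tinner p 1 l Z (tprod p l H Z))"

definition t_pd :: "nat \<Rightarrow> nat \<Rightarrow> tensor \<Rightarrow> bool" where
  "t_pd p l H \<longleftrightarrow> tsym p l H \<and>
     (\<forall>Z. is_tensor p 1 l Z \<longrightarrow> Z \<noteq> (\<lambda>_ _ _. 0) \<longrightarrow> 0 < tinner p 1 l Z (tprod p l H Z))"

end

(*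
  For any decomposition A = P * H with P^T * P = I and H symmetric, H * H = A^T * A; since
  t-positive semidefinite square roots are unique, H is unique.  A square root of a t-psd G
  exists: scaled so that T = I - G / kappa satisfies 0 <= T <= I, the series of
  1 - sqrt(1 - x) evaluated at T converges entrywise, because the powers of T are bounded.
  If A has trivial kernel then so does H = sqrt(A^T * A); its block circulant matrix is then
  invertible, and P = A * H^-1 lies in the Stiefel set.  A general A is the limit of
  A + e E, with E the n x p identity, and these perturbations have trivial kernel unless -e
  is one of the finitely many eigenvalues of E^T * A; the Stiefel set is bounded, so along a
  subsequence the polar factors converge to a polar decomposition of A.  If A^T * A is
  t-positive definite, H has trivial kernel; this forces P to be unique and H to be
  t-positive definite.
*)

theory Submission
  imports Defs "HOL-Library.Function_Algebras" "Jordan_Normal_Form.Char_Poly" "Jordan_Normal_Form.Determinant"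
begin

section \<open>Cyclic index arithmetic\<close>

text \<open>csub l k t is the frontal-slice index (k - t) mod l of block (k, t) of bcirc.\<close>

definition csub :: "nat \<Rightarrow> nat \<Rightarrow> nat \<Rightarrow> nat" where
  "csub l k t = (k + l - t) mod l"

lemma csub_less: "0 < l \<Longrightarrow> csub l k t < l"
  by (simp add: csub_def)

lemma csub_add_mod: "t \<le> l \<Longrightarrow> (csub l k t + t) mod l = k mod l"
  by (simp add: csub_def mod_add_left_eq)

lemma csub_unique:
  assumes "s < l" and "t \<le> l" and "(s + t) mod l = k mod l"
  shows "csub l k t = s"
proof -
  have "csub l k t = (k + (l - t)) mod l"
    unfolding csub_def using assms(2) by simp
  also have "\<dots> = ((s + t) mod l + (l - t)) mod l" using assms(3) by (simp add: mod_add_left_eq)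
  also have "\<dots> = (s + t + (l - t)) mod l" by (simp only: mod_add_left_eq)
  also have "\<dots> = (s + l) mod l" using assms(2) by simp
  finally show ?thesis using assms(1) by simp
qed

lemma csub_self: "k < l \<Longrightarrow> csub l k k = 0"
  by (simp add: csub_def)

lemma csub_0_right: "k < l \<Longrightarrow> csub l k 0 = k"
  by (simp add: csub_def)

lemma csub_csub_self: "t < l \<Longrightarrow> csub l k (csub l k t) = t"
  by (rule csub_unique) (use csub_add_mod[of t l k] in \<open>auto simp: add.commute csub_less less_imp_le\<close>)

lemma csub_eq_0_iff: "k < l \<Longrightarrow> t < l \<Longrightarrow> csub l k t = 0 \<longleftrightarrow> t = k"
  using csub_csub_self[of t l k] csub_0_right[of k l] csub_self[of k l] by auto

lemma csub_add_mod_left: "s < l \<Longrightarrow> t < l \<Longrightarrow> csub l ((s + t) mod l) t = s"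
  by (rule csub_unique) auto

lemma csub_csub:
  assumes "t < l" and "s < l"
  shows "csub l (csub l k t) s = csub l k ((s + t) mod l)"
proof -
  define u where "u = csub l k ((s + t) mod l)"
  have "((u + s) mod l + t) mod l = (u + (s + t) mod l) mod l"
    by (simp add: mod_add_left_eq mod_add_right_eq add.assoc)
  also have "\<dots> = k mod l" unfolding u_def using assms(1) by (intro csub_add_mod) simp
  finally have "csub l k t = (u + s) mod l"
    using assms(1) by (intro csub_unique) auto
  hence "csub l (csub l k t) s = u"
    using assms by (intro csub_unique) (auto simp: u_def csub_less)
  thus ?thesis by (simp add: u_def)
qed

lemma int_csub: "t \<le> l \<Longrightarrow> int (csub l k t) = (int k - int t) mod int l"
proof -
  assume "t \<le> l"
  hence "int (k + l - t) = (int k - int t) + int l" by simp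
  thus ?thesis unfolding csub_def zmod_int by simp
qed

lemma csub_0_csub:
  assumes "t < l" and "k < l"
  shows "csub l 0 (csub l t k) = csub l k t"
proof -
  have "int (csub l 0 (csub l t k)) = (- ((int t - int k) mod int l)) mod int l"
    using assms by (simp add: int_csub csub_less less_imp_le)
  also have "\<dots> = int (csub l k t)"
    using assms by (simp add: int_csub mod_diff_right_eq[of 0, simplified])
  finally show ?thesis by simp
qed

lemma sum_csub_reindex: "k < l \<Longrightarrow> (\<Sum>t<l. f (csub l k t)) = (\<Sum>t<l. f t)"
  by (rule sum.reindex_bij_witness[where i = "csub l k" and j = "csub l k"]) (auto simp: csub_csub_self csub_less)

lemma sum_add_mod_reindex: "c < (l::nat) \<Longrightarrow> (\<Sum>t<l. f ((t + c) mod l)) = (\<Sum>t<l. f t)"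
  by (rule sum.reindex_bij_witness[where i = "\<lambda>t. csub l t c" and j = "\<lambda>t. (t + c) mod l"])
    (auto simp: csub_add_mod_left csub_add_mod csub_less less_imp_le)

section \<open>Algebra of the t-product\<close>

lemma tprod_csub:
  "tprod p l A B i j k = (if k < l then (\<Sum>t<l. \<Sum>m<p. A i m (csub l k t) * B m j t) else 0)"
  by (simp add: tprod_def csub_def)

lemma ttrans_csub: "ttrans l A i j k = (if k < l then A j i (csub l 0 k) else 0)"
  by (simp add: ttrans_def csub_def)

lemma is_tensor_tprod: "is_tensor n p l A \<Longrightarrow> is_tensor p q l B \<Longrightarrow> is_tensor n q l (tprod p l A B)"
  unfolding is_tensor_def tprod_csub by auto

lemma is_tensor_ttrans: "is_tensor n p l A \<Longrightarrow> is_tensor p n l (ttrans l A)"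
  unfolding is_tensor_def ttrans_csub by auto

lemma is_tensor_tid: "0 < l \<Longrightarrow> is_tensor p p l (tid p)"
  unfolding is_tensor_def tid_def by auto

lemma tensor_eqI:
  assumes "is_tensor n p l A" and "is_tensor n p l B"
    and "\<And>i j k. i < n \<Longrightarrow> j < p \<Longrightarrow> k < l \<Longrightarrow> A i j k = B i j k"
  shows "A = B"
  using assms unfolding is_tensor_def by (intro ext) (metis not_le)

lemma sum_swap_pairs:
  "(\<Sum>a\<in>A. \<Sum>b\<in>B. \<Sum>c\<in>C. \<Sum>d\<in>D. f a b c d) = (\<Sum>c\<in>C. \<Sum>d\<in>D. \<Sum>a\<in>A. \<Sum>b\<in>B. f a b c d)"
proof -
  have "(\<Sum>a\<in>A. \<Sum>b\<in>B. \<Sum>c\<in>C. \<Sum>d\<in>D. f a b c d) = (\<Sum>a\<in>A. \<Sum>c\<in>C. \<Sum>b\<in>B. \<Sum>d\<in>D. f a b c d)"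
    by (intro sum.cong refl sum.swap)
  also have "\<dots> = (\<Sum>c\<in>C. \<Sum>a\<in>A. \<Sum>d\<in>D. \<Sum>b\<in>B. f a b c d)"
    by (subst sum.swap) (intro sum.cong refl sum.swap)
  also have "\<dots> = (\<Sum>c\<in>C. \<Sum>d\<in>D. \<Sum>a\<in>A. \<Sum>b\<in>B. f a b c d)"
    by (intro sum.cong refl sum.swap)
  finally show ?thesis .
qed

lemma tprod_assoc:
  assumes "0 < l"
  shows "tprod q l (tprod p l A B) C = tprod p l A (tprod q l B C)"
proof (intro ext)
  fix i j k
  show "tprod q l (tprod p l A B) C i j k = tprod p l A (tprod q l B C) i j k"
  proof (cases "k < l")
    case k: True
    have shift: "(\<Sum>s<l. \<Sum>m'<p. A i m' (csub l (csub l k t) s) * B m' m s) =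
        (\<Sum>s<l. \<Sum>m'<p. A i m' (csub l k s) * B m' m (csub l s t))" if t: "t < l" for t m
    proof -
      have "(\<Sum>s<l. \<Sum>m'<p. A i m' (csub l k s) * B m' m (csub l s t)) =
          (\<Sum>s<l. \<Sum>m'<p. A i m' (csub l k ((s + t) mod l)) * B m' m (csub l ((s + t) mod l) t))"
        by (rule sum_add_mod_reindex[OF t, symmetric])
      also have "\<dots> = (\<Sum>s<l. \<Sum>m'<p. A i m' (csub l (csub l k t) s) * B m' m s)"
        using t by (intro sum.cong refl) (simp add: csub_csub csub_add_mod_left)
      finally show ?thesis by simp
    qed
    have "tprod q l (tprod p l A B) C i j k =
        (\<Sum>t<l. \<Sum>m<q. (\<Sum>s<l. \<Sum>m'<p. A i m' (csub l (csub l k t) s) * B m' m s) * C m j t)"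
      using k assms by (simp add: tprod_csub csub_less)
    also have "\<dots> = (\<Sum>t<l. \<Sum>m<q. \<Sum>s<l. \<Sum>m'<p. A i m' (csub l k s) * B m' m (csub l s t) * C m j t)"
      by (intro sum.cong refl) (simp add: shift sum_distrib_right)
    also have "\<dots> = (\<Sum>s<l. \<Sum>m'<p. \<Sum>t<l. \<Sum>m<q. A i m' (csub l k s) * B m' m (csub l s t) * C m j t)"
      by (rule sum_swap_pairs)
    also have "\<dots> = tprod p l A (tprod q l B C) i j k"
      using k by (simp add: tprod_csub sum_distrib_left mult.assoc)
    finally show ?thesis .
  qed (simp add: tprod_csub)
qed

lemma ttrans_tprod:
  assumes l: "0 < l"
  shows "ttrans l (tprod p l A B) = tprod p l (ttrans l B) (ttrans l A)"
proof (intro ext)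
  fix i j k
  show "ttrans l (tprod p l A B) i j k = tprod p l (ttrans l B) (ttrans l A) i j k"
  proof (cases "k < l")
    case k: True
    have "tprod p l (ttrans l B) (ttrans l A) i j k
        = (\<Sum>t<l. \<Sum>m<p. B m i (csub l 0 (csub l k t)) * A j m (csub l 0 t))"
      using k by (simp add: tprod_csub ttrans_csub csub_less[OF l])
    also have "\<dots> = (\<Sum>t<l. \<Sum>m<p. B m i (csub l t k) * A j m (csub l 0 t))"
      using k by (intro sum.cong refl) (simp add: csub_0_csub)
    also have "\<dots> = (\<Sum>t<l. \<Sum>m<p. B m i (csub l ((t + k) mod l) k) * A j m (csub l 0 ((t + k) mod l)))"
      by (rule sum_add_mod_reindex[OF k, symmetric])
    also have "\<dots> = (\<Sum>t<l. \<Sum>m<p. B m i t * A j m (csub l (csub l 0 k) t))"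
      using k by (intro sum.cong refl) (simp add: csub_add_mod_left csub_csub)
    also have "\<dots> = ttrans l (tprod p l A B) i j k"
      using k by (simp add: tprod_csub ttrans_csub csub_less[OF l] mult.commute)
    finally show ?thesis by simp
  qed (simp add: tprod_csub ttrans_csub)
qed

lemma ttrans_ttrans: "0 < l \<Longrightarrow> is_tensor n p l A \<Longrightarrow> ttrans l (ttrans l A) = A"
  by (intro ext) (auto simp: ttrans_csub csub_less csub_csub_self is_tensor_def)

lemma ttrans_tid: "0 < l \<Longrightarrow> ttrans l (tid p) = tid p"
  by (intro ext) (auto simp: ttrans_csub tid_def csub_eq_0_iff)

lemma tprod_tid_left:
  assumes l: "0 < l" and B: "is_tensor p q l B"
  shows "tprod p l (tid p) B = B"
proof (rule tensor_eqI[OF is_tensor_tprod[OF is_tensor_tid[OF l] B] B])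
  fix i j k assume i: "i < p" and k: "k < l"
  have "tid p i m (csub l k t) * B m j t = (if t = k \<and> m = i then B i j k else 0)" if "t < l" for t m
    using i k that by (auto simp: tid_def csub_eq_0_iff)
  hence "tprod p l (tid p) B i j k = (\<Sum>t<l. \<Sum>m<p. if t = k \<and> m = i then B i j k else 0)"
    using k by (simp add: tprod_csub)
  also have "\<dots> = (\<Sum>t<l. if t = k then B i j k else 0)"
    using i by (intro sum.cong refl) auto
  also have "\<dots> = B i j k"
    using k by simp
  finally show "tprod p l (tid p) B i j k = B i j k" .
qed

lemma tprod_tid_right:
  assumes l: "0 < l" and A: "is_tensor n p l A"
  shows "tprod p l A (tid p) = A"
proof (rule tensor_eqI[OF is_tensor_tprod[OF A is_tensor_tid[OF l]] A])
  fix i j k assume j: "j < p" and k: "k < l"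
  have "A i m (csub l k t) * tid p m j t = (if t = 0 \<and> m = j then A i j k else 0)" for t m
    using j k by (auto simp: tid_def csub_0_right)
  hence "tprod p l A (tid p) i j k = (\<Sum>t<l. \<Sum>m<p. if t = 0 \<and> m = j then A i j k else 0)"
    using k by (simp add: tprod_csub)
  also have "\<dots> = (\<Sum>t<l. if t = 0 then A i j k else 0)"
    using j by (intro sum.cong refl) auto
  also have "\<dots> = A i j k"
    using l by simp
  finally show "tprod p l A (tid p) i j k = A i j k" .
qed

definition tscale :: "real \<Rightarrow> tensor \<Rightarrow> tensor" where
  "tscale c A = (\<lambda>i j k. c * A i j k)"

lemma tensor_zero_eq: "(\<lambda>_ _ _. 0) = (0 :: tensor)"
  by (simp add: zero_fun_def)

lemma is_tensor_zero: "is_tensor n p l 0"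
  by (simp add: is_tensor_def)

lemma is_tensor_add: "is_tensor n p l A \<Longrightarrow> is_tensor n p l B \<Longrightarrow> is_tensor n p l (A + B)"
  by (simp add: is_tensor_def)

lemma is_tensor_diff: "is_tensor n p l A \<Longrightarrow> is_tensor n p l B \<Longrightarrow> is_tensor n p l (A - B)"
  by (simp add: is_tensor_def)

lemma is_tensor_tscale: "is_tensor n p l A \<Longrightarrow> is_tensor n p l (tscale c A)"
  by (simp add: is_tensor_def tscale_def)

lemma tprod_zero_right: "tprod p l A 0 = 0"
  by (intro ext) (simp add: tprod_def)

lemma tprod_add_left: "tprod p l (A + B) C = tprod p l A C + tprod p l B C"
  by (intro ext) (simp add: tprod_def distrib_right sum.distrib)

lemma tprod_add_right: "tprod p l A (B + C) = tprod p l A B + tprod p l A C"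
  by (intro ext) (simp add: tprod_def distrib_left sum.distrib)

lemma tprod_diff_left: "tprod p l (A - B) C = tprod p l A C - tprod p l B C"
  by (intro ext) (simp add: tprod_def left_diff_distrib sum_subtractf)

lemma tprod_diff_right: "tprod p l A (B - C) = tprod p l A B - tprod p l A C"
  by (intro ext) (simp add: tprod_def right_diff_distrib sum_subtractf)

lemma tprod_tscale_left: "tprod p l (tscale c A) B = tscale c (tprod p l A B)"
  by (intro ext) (simp add: tprod_def tscale_def sum_distrib_left mult.assoc)

lemma tprod_tscale_right: "tprod p l A (tscale c B) = tscale c (tprod p l A B)"
  by (intro ext) (simp add: tprod_def tscale_def sum_distrib_left mult.left_commute)

lemma ttrans_zero: "ttrans l 0 = 0"
  by (intro ext) (simp add: ttrans_def)

lemma ttrans_diff: "ttrans l (A - B) = ttrans l A - ttrans l B"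
  by (intro ext) (simp add: ttrans_def)

lemma ttrans_tscale: "ttrans l (tscale c A) = tscale c (ttrans l A)"
  by (intro ext) (simp add: ttrans_def tscale_def)

lemma tinner_add_left: "tinner n p l (X + Y) Z = tinner n p l X Z + tinner n p l Y Z"
  by (simp add: tinner_def distrib_right sum.distrib)

lemma tinner_add_right: "tinner n p l X (Y + Z) = tinner n p l X Y + tinner n p l X Z"
  by (simp add: tinner_def distrib_left sum.distrib)

lemma tinner_diff_right: "tinner n p l X (Y - Z) = tinner n p l X Y - tinner n p l X Z"
  by (simp add: tinner_def right_diff_distrib sum_subtractf)

lemma tinner_tscale_left: "tinner n p l (tscale c X) Y = c * tinner n p l X Y"
  by (simp add: tinner_def tscale_def sum_distrib_left mult.assoc)

lemma tinner_tscale_right: "tinner n p l X (tscale c Y) = c * tinner n p l X Y"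
  by (simp add: tinner_def tscale_def sum_distrib_left mult.left_commute)

lemma tinner_zero_right: "tinner n p l X 0 = 0"
  by (simp add: tinner_def)

lemma tinner_commute: "tinner n p l X Y = tinner n p l Y X"
  by (simp add: tinner_def mult.commute)

lemma tinner_self_nonneg: "0 \<le> tinner n p l X X"
  by (simp add: tinner_def sum_nonneg)

lemma tinner_self_eq_0_iff:
  assumes "is_tensor n p l X"
  shows "tinner n p l X X = 0 \<longleftrightarrow> X = 0"
proof
  assume "tinner n p l X X = 0"
  hence "\<forall>i<n. \<forall>j<p. \<forall>k<l. X i j k * X i j k = 0"
    by (simp add: tinner_def sum_nonneg sum_nonneg_eq_0_iff)
  thus "X = 0" by (intro tensor_eqI[OF assms is_tensor_zero]) simp
qed (simp add: tinner_def)

lemma entry_sq_le_tinner: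
  assumes "i < n" and "j < p" and "k < l"
  shows "(X i j k)\<^sup>2 \<le> tinner n p l X X"
proof -
  have "(X i j k)\<^sup>2 \<le> (\<Sum>k<l. X i j k * X i j k)"
    using assms member_le_sum[of k "{..<l}" "\<lambda>k. X i j k * X i j k"] by (simp add: power2_eq_square)
  also have "\<dots> \<le> (\<Sum>j<p. \<Sum>k<l. X i j k * X i j k)"
    using assms member_le_sum[of j "{..<p}" "\<lambda>j. \<Sum>k<l. X i j k * X i j k"] by (simp add: sum_nonneg)
  also have "\<dots> \<le> tinner n p l X X"
    using assms member_le_sum[of i "{..<n}" "\<lambda>i. \<Sum>j<p. \<Sum>k<l. X i j k * X i j k"]
    by (simp add: tinner_def sum_nonneg)
  finally show ?thesis .
qed

lemma tinner_eq_trace: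
  assumes l: "0 < l"
  shows "tinner n q l X Y = (\<Sum>j<q. tprod n l (ttrans l X) Y j j 0)"
proof -
  have "tinner n q l X Y = (\<Sum>j<q. \<Sum>i<n. \<Sum>k<l. X i j k * Y i j k)"
    unfolding tinner_def by (rule sum.swap)
  also have "\<dots> = (\<Sum>j<q. \<Sum>k<l. \<Sum>i<n. X i j k * Y i j k)"
    by (intro sum.cong refl sum.swap)
  also have "\<dots> = (\<Sum>j<q. tprod n l (ttrans l X) Y j j 0)"
    using l by (simp add: tprod_csub ttrans_csub csub_less csub_csub_self)
  finally show ?thesis .
qed

lemma tinner_tprod_adjoint:
  assumes l: "0 < l" and A: "is_tensor n p l A"
  shows "tinner n q l X (tprod p l A Y) = tinner p q l (tprod n l (ttrans l A) X) Y"
proof -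
  have "tprod n l (ttrans l X) (tprod p l A Y) = tprod p l (ttrans l (tprod n l (ttrans l A) X)) Y"
    by (simp add: tprod_assoc[OF l] ttrans_tprod[OF l] ttrans_ttrans[OF l A])
  thus ?thesis by (simp add: tinner_eq_trace[OF l])
qed

lemma tinner_ttrans:
  assumes l: "0 < l"
  shows "tinner p n l (ttrans l X) (ttrans l Y) = tinner n p l X Y"
proof -
  have "tinner p n l (ttrans l X) (ttrans l Y) = (\<Sum>i<p. \<Sum>j<n. \<Sum>k<l. X j i (csub l 0 k) * Y j i (csub l 0 k))"
    by (simp add: tinner_def ttrans_csub)
  also have "\<dots> = (\<Sum>i<p. \<Sum>j<n. \<Sum>k<l. X j i k * Y j i k)"
    by (intro sum.cong refl sum_csub_reindex l)
  also have "\<dots> = tinner n p l X Y"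
    unfolding tinner_def by (rule sum.swap)
  finally show ?thesis .
qed

section \<open>t-positive semidefinite tensors\<close>

definition tcol :: "nat \<Rightarrow> tensor \<Rightarrow> tensor" where
  "tcol j Z = (\<lambda>i j' k. if j' = 0 then Z i j k else 0)"

lemma is_tensor_tcol: "is_tensor p q l Z \<Longrightarrow> is_tensor p 1 l (tcol j Z)"
  by (simp add: is_tensor_def tcol_def)

lemma tprod_tcol: "tprod p l H (tcol j Z) = tcol j (tprod p l H Z)"
  by (intro ext) (simp add: tprod_def tcol_def)

lemma tinner_eq_sum_tcol: "tinner p q l Z W = (\<Sum>j<q. tinner p 1 l (tcol j Z) (tcol j W))"
proof -
  have "tinner p q l Z W = (\<Sum>j<q. \<Sum>i<p. \<Sum>k<l. Z i j k * W i j k)"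
    unfolding tinner_def by (rule sum.swap)
  thus ?thesis by (simp add: tinner_def tcol_def)
qed

lemma t_psd_tinner_nonneg:
  assumes "t_psd p l H" and "is_tensor p q l Z"
  shows "0 \<le> tinner p q l Z (tprod p l H Z)"
proof -
  have "0 \<le> tinner p 1 l (tcol j Z) (tprod p l H (tcol j Z))" for j
    using assms(1) is_tensor_tcol[OF assms(2)] unfolding t_psd_def by blast
  thus ?thesis unfolding tinner_eq_sum_tcol[of p q l Z] tprod_tcol[symmetric] by (simp add: sum_nonneg)
qed

lemma tinner_tprod_tsym:
  assumes "0 < l" and "tsym p l H"
  shows "tinner p q l X (tprod p l H Y) = tinner p q l (tprod p l H X) Y"
  using assms tinner_tprod_adjoint[of l p p H q X Y] by (simp add: tsym_def)

lemma quadratic_nonneg_imp_sq_le: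
  fixes a b c :: real
  assumes nonneg: "\<And>s. 0 \<le> a + 2 * s * b + s\<^sup>2 * c" and "0 \<le> c"
  shows "b\<^sup>2 \<le> a * c"
proof (cases "c = 0")
  case True
  have "b = 0"
  proof (rule ccontr)
    assume "b \<noteq> 0"
    hence "a + 2 * (- (a + 1) / (2 * b)) * b + (- (a + 1) / (2 * b))\<^sup>2 * c = -1"
      using True by (simp add: field_simps)
    thus False using nonneg[of "- (a + 1) / (2 * b)"] by simp
  qed
  thus ?thesis using True by simp
next
  case False
  hence "0 < c" using \<open>0 \<le> c\<close> by simp
  have "0 \<le> a + 2 * (- b / c) * b + (- b / c)\<^sup>2 * c" by (rule nonneg)
  also have "\<dots> = a - b\<^sup>2 / c" using \<open>0 < c\<close> by (simp add: power2_eq_square field_simps)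
  finally show ?thesis using \<open>0 < c\<close> by (simp add: field_simps)
qed

lemma t_psd_cauchy_schwarz:
  assumes l: "0 < l" and H: "t_psd p l H" and X: "is_tensor p q l X" and Y: "is_tensor p q l Y"
  shows "(tinner p q l X (tprod p l H Y))\<^sup>2 \<le> tinner p q l X (tprod p l H X) * tinner p q l Y (tprod p l H Y)"
proof (rule quadratic_nonneg_imp_sq_le)
  fix s
  have sym: "tinner p q l Y (tprod p l H X) = tinner p q l X (tprod p l H Y)"
    using H tinner_tprod_tsym[OF l, of p H q Y X] by (simp add: t_psd_def tinner_commute)
  have "0 \<le> tinner p q l (X + tscale s Y) (tprod p l H (X + tscale s Y))"
    by (intro t_psd_tinner_nonneg H is_tensor_add X is_tensor_tscale Y)
  also have "\<dots> = tinner p q l X (tprod p l H X) + 2 * s * tinner p q l X (tprod p l H Y)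
      + s\<^sup>2 * tinner p q l Y (tprod p l H Y)"
    by (simp add: tprod_add_right tprod_tscale_right tinner_add_left tinner_add_right
        tinner_tscale_left tinner_tscale_right sym power2_eq_square algebra_simps)
  finally show "0 \<le> tinner p q l X (tprod p l H X) + 2 * s * tinner p q l X (tprod p l H Y)
      + s\<^sup>2 * tinner p q l Y (tprod p l H Y)" .
qed (rule t_psd_tinner_nonneg[OF H Y])

lemma t_psd_tid: "0 < l \<Longrightarrow> t_psd p l (tid p)"
  by (simp add: t_psd_def tsym_def is_tensor_tid ttrans_tid tprod_tid_left tinner_self_nonneg)

lemma tinner_cauchy_schwarz:
  assumes "0 < l" and "is_tensor p q l X" and "is_tensor p q l Y"
  shows "(tinner p q l X Y)\<^sup>2 \<le> tinner p q l X X * tinner p q l Y Y"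
  using t_psd_cauchy_schwarz[OF assms(1) t_psd_tid[OF assms(1)] assms(2,3)] assms
  by (simp add: tprod_tid_left)

lemma t_psd_form_eq_0_imp:
  assumes l: "0 < l" and H: "t_psd p l H" and Z: "is_tensor p q l Z"
    and form: "tinner p q l Z (tprod p l H Z) = 0"
  shows "tprod p l H Z = 0"
proof -
  define W where "W = tprod p l H Z"
  have W: "is_tensor p q l W"
    using H Z by (simp add: W_def t_psd_def tsym_def is_tensor_tprod)
  have "(tinner p q l W W)\<^sup>2 \<le> tinner p q l W (tprod p l H W) * 0"
    using t_psd_cauchy_schwarz[OF l H W Z] form by (simp add: W_def)
  hence "tinner p q l W W = 0" by simp
  thus ?thesis using tinner_self_eq_0_iff[OF W] by (simp add: W_def)
qed

lemma tinner_gram: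
  assumes l: "0 < l" and A: "is_tensor n p l A"
  shows "tinner p q l Z (tprod p l (tprod n l (ttrans l A) A) Z) = tinner n q l (tprod p l A Z) (tprod p l A Z)"
  using tinner_tprod_adjoint[OF l is_tensor_ttrans[OF A], of q Z "tprod p l A Z"]
  by (simp add: tprod_assoc[OF l] ttrans_ttrans[OF l A] tinner_commute)

lemma t_psd_gram:
  assumes l: "0 < l" and A: "is_tensor n p l A"
  shows "t_psd p l (tprod n l (ttrans l A) A)"
  using is_tensor_tprod[OF is_tensor_ttrans[OF A] A] tinner_gram[OF l A]
  by (simp add: t_psd_def tsym_def ttrans_tprod[OF l] ttrans_ttrans[OF l A] tinner_self_nonneg)

lemma t_psd_sqrt_unique:
  assumes l: "0 < l" and H1: "t_psd p l H1" and H2: "t_psd p l H2"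
    and sq: "tprod p l H1 H1 = tprod p l H2 H2"
  shows "H1 = H2"
proof -
  have T1: "is_tensor p p l H1" and S1: "ttrans l H1 = H1"
    and T2: "is_tensor p p l H2" and S2: "ttrans l H2 = H2"
    using H1 H2 by (auto simp: t_psd_def tsym_def)
  define D where "D = H1 - H2"
  have D: "is_tensor p p l D" and SD: "ttrans l D = D"
    using T1 T2 S1 S2 by (simp_all add: D_def is_tensor_diff ttrans_diff)
  txt \<open>The two nonnegative forms below add up to the form of H1 D + D H2 = H1 H1 - H2 H2 = 0.\<close>
  have "tinner p p l D (tprod p l D H2) = tinner p p l D (tprod p l H2 D)"
    using tinner_ttrans[OF l, of p p D "tprod p l D H2"] by (simp add: ttrans_tprod[OF l] SD S2)
  hence "tinner p p l D (tprod p l H1 D) + tinner p p l D (tprod p l H2 D) = 0"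
    using sq by (simp add: D_def tprod_diff_left tprod_diff_right tinner_diff_right)
  moreover have "0 \<le> tinner p p l D (tprod p l H1 D)" "0 \<le> tinner p p l D (tprod p l H2 D)"
    by (intro t_psd_tinner_nonneg H1 H2 D)+
  ultimately have "tprod p l H1 D = 0" "tprod p l H2 D = 0"
    by (intro t_psd_form_eq_0_imp[OF l _ D]; simp add: H1 H2)+
  hence "tprod p l D D = 0"
    by (simp add: D_def tprod_diff_left)
  hence "tinner p p l D D = 0"
    using tinner_tprod_adjoint[OF l D, of p D "tid p"] by (simp add: tprod_tid_right[OF l D] SD tinner_def)
  thus ?thesis using tinner_self_eq_0_iff[OF D] by (simp add: D_def)
qed

section \<open>Square roots\<close>

text \<open>Taylor coefficients of 1 - sqrt(1 - x): the power series y = (\<Sum>n. c n * x ^ n)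
  is determined by y^2 = 2 y - x and y(0) = 0.\<close>

fun sqrt_coeff :: "nat \<Rightarrow> real" where
  "sqrt_coeff 0 = 0"
| "sqrt_coeff (Suc 0) = 1 / 2"
| "sqrt_coeff (Suc (Suc n)) = (\<Sum>i\<in>{1..Suc n}. sqrt_coeff i * sqrt_coeff (Suc (Suc n) - i)) / 2"

lemma sqrt_coeff_nonneg: "0 \<le> sqrt_coeff n"
proof (induction n rule: sqrt_coeff.induct)
  case (3 n)
  have "0 \<le> (\<Sum>i\<in>{1..Suc n}. sqrt_coeff i * sqrt_coeff (Suc (Suc n) - i))"
    using 3 by (intro sum_nonneg mult_nonneg_nonneg) auto
  thus ?case unfolding sqrt_coeff.simps by (rule divide_nonneg_pos) simp
qed simp_all

lemma sqrt_coeff_convolution: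
  "(\<Sum>i\<le>n. sqrt_coeff i * sqrt_coeff (n - i)) = 2 * sqrt_coeff n - (if n = 1 then 1 else 0)"
proof (cases n rule: sqrt_coeff.cases)
  case (3 m)
  have "{..Suc (Suc m)} = insert 0 (insert (Suc (Suc m)) {1..Suc m})" by auto
  thus ?thesis using 3 by simp
qed simp_all

lemma sum_sqrt_coeff_le_1: "(\<Sum>n<N. sqrt_coeff n) \<le> 1"
proof (induction N rule: less_induct)
  case (less N)
  show ?case
  proof (cases "N \<le> 2")
    case True
    have "(\<Sum>n<N. sqrt_coeff n) \<le> (\<Sum>n<2. sqrt_coeff n)"
      using True by (intro sum_mono2) (auto simp: sqrt_coeff_nonneg)
    also have "\<dots> = 1 / 2" by (simp add: numeral_2_eq_2)
    finally show ?thesis by simp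
  next
    case False
    define M where "M = N - 1"
    have M: "M < N" "N = Suc M" using False by (auto simp: M_def)
    txt \<open>Summing the convolution identity over n < N bounds 2 S_N - 1 by S_M^2 \<le> 1.\<close>
    have "2 * (\<Sum>n<N. sqrt_coeff n) - 1 = (\<Sum>n<N. 2 * sqrt_coeff n - (if n = 1 then 1 else 0))"
      using False by (simp add: sum_subtractf sum_distrib_left)
    also have "\<dots> = (\<Sum>n<N. \<Sum>i\<le>n. sqrt_coeff i * sqrt_coeff (n - i))"
      by (simp add: sqrt_coeff_convolution)
    also have "\<dots> = (\<Sum>(i, j)\<in>{(i, j). i + j < N}. sqrt_coeff i * sqrt_coeff j)"
      by (rule sum.triangle_reindex[symmetric])
    also have "\<dots> = (\<Sum>(i, j)\<in>{(i, j). i + j < N \<and> i \<noteq> 0 \<and> j \<noteq> 0}. sqrt_coeff i * sqrt_coeff j)"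
    proof (rule sum.mono_neutral_right)
      show "finite {(i, j). i + j < N}"
        by (rule finite_subset[of _ "{..<N} \<times> {..<N}"]) auto
    qed (auto intro!: gr0I)
    also have "\<dots> \<le> (\<Sum>(i, j)\<in>{..<M} \<times> {..<M}. sqrt_coeff i * sqrt_coeff j)"
      by (rule sum_mono2) (auto simp: M sqrt_coeff_nonneg)
    also have "\<dots> = (\<Sum>n<M. sqrt_coeff n) * (\<Sum>n<M. sqrt_coeff n)"
      by (simp add: sum_product sum.cartesian_product)
    also have "\<dots> \<le> 1 * 1"
      using less M by (intro mult_mono) (auto intro: sum_nonneg simp: sqrt_coeff_nonneg)
    finally show ?thesis by simp
  qed
qed

lemma summable_sqrt_coeff: "summable sqrt_coeff"
  by (rule summableI_nonneg_bounded[OF sqrt_coeff_nonneg sum_sqrt_coeff_le_1])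

lemma suminf_sqrt_coeff_le_1: "suminf sqrt_coeff \<le> 1"
  by (rule suminf_le_const[OF summable_sqrt_coeff sum_sqrt_coeff_le_1])

primrec tpow :: "nat \<Rightarrow> nat \<Rightarrow> tensor \<Rightarrow> nat \<Rightarrow> tensor" where
  "tpow p l T 0 = tid p"
| "tpow p l T (Suc j) = tprod p l T (tpow p l T j)"

lemma is_tensor_tpow: "0 < l \<Longrightarrow> is_tensor p p l T \<Longrightarrow> is_tensor p p l (tpow p l T j)"
  by (induction j) (auto intro: is_tensor_tprod is_tensor_tid)

lemma tpow_add:
  assumes l: "0 < l" and T: "is_tensor p p l T"
  shows "tpow p l T (i + j) = tprod p l (tpow p l T i) (tpow p l T j)"
proof (induction i)
  case 0 thus ?case using tprod_tid_left[OF l is_tensor_tpow[OF l T]] by simp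
next
  case (Suc i) thus ?case by (simp add: tprod_assoc[OF l])
qed

lemma tpow_1: "0 < l \<Longrightarrow> is_tensor p p l T \<Longrightarrow> tpow p l T 1 = T"
  by (simp add: tprod_tid_right)

lemma ttrans_tpow:
  assumes l: "0 < l" and T: "tsym p l T"
  shows "ttrans l (tpow p l T j) = tpow p l T j"
proof (induction j)
  case 0 thus ?case by (simp add: ttrans_tid[OF l])
next
  case (Suc j)
  have T': "is_tensor p p l T" using T by (simp add: tsym_def)
  have "ttrans l (tpow p l T (Suc j)) = tprod p l (tpow p l T j) T"
    using Suc T by (simp add: ttrans_tprod[OF l] tsym_def)
  also have "\<dots> = tpow p l T (j + 1)"
    by (simp only: tpow_add[OF l T'] tpow_1[OF l T'])
  finally show ?case by simp
qed

definition t_contraction :: "nat \<Rightarrow> nat \<Rightarrow> tensor \<Rightarrow> bool" where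
  "t_contraction p l T \<longleftrightarrow> t_psd p l T \<and> t_psd p l (tid p - T)"

lemma t_contraction_form_le:
  assumes l: "0 < l" and T: "t_contraction p l T" and Z: "is_tensor p q l Z"
  shows "tinner p q l Z (tprod p l T Z) \<le> tinner p q l Z Z"
  using t_psd_tinner_nonneg[of p l "tid p - T" q Z] T Z
  by (simp add: t_contraction_def tprod_diff_left tprod_tid_left[OF l Z] tinner_diff_right)

lemma t_contraction_norm_le:
  assumes l: "0 < l" and T: "t_contraction p l T" and Z: "is_tensor p q l Z"
  shows "tinner p q l (tprod p l T Z) (tprod p l T Z) \<le> tinner p q l Z Z"
proof -
  have Tpsd: "t_psd p l T" using T by (simp add: t_contraction_def)
  define W where "W = tprod p l T Z"
  have W: "is_tensor p q l W"
    using Tpsd Z by (simp add: W_def t_psd_def tsym_def is_tensor_tprod)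
  define w where "w = tinner p q l W W"
  have "w\<^sup>2 \<le> tinner p q l W (tprod p l T W) * tinner p q l Z (tprod p l T Z)"
    using t_psd_cauchy_schwarz[OF l Tpsd W Z] by (simp add: w_def W_def)
  also have "\<dots> \<le> w * tinner p q l Z Z"
    using t_contraction_form_le[OF l T] W Z t_psd_tinner_nonneg[OF Tpsd]
    by (intro mult_mono) (auto simp: w_def tinner_self_nonneg)
  finally have "w * w \<le> w * tinner p q l Z Z" by (simp add: power2_eq_square)
  hence "w \<le> tinner p q l Z Z"
    using tinner_self_nonneg[of p q l W] tinner_self_nonneg[of p q l Z]
    by (cases "w = 0") (auto simp: w_def mult_le_cancel_left)
  thus ?thesis by (simp add: w_def W_def)
qed

lemma tpow_norm_le:
  assumes l: "0 < l" and T: "t_contraction p l T" and Z: "is_tensor p q l Z"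
  shows "tinner p q l (tprod p l (tpow p l T j) Z) (tprod p l (tpow p l T j) Z) \<le> tinner p q l Z Z"
proof (induction j)
  case 0 thus ?case by (simp add: tprod_tid_left[OF l Z])
next
  case (Suc j)
  have "is_tensor p p l T" using T by (simp add: t_contraction_def t_psd_def tsym_def)
  hence "is_tensor p q l (tprod p l (tpow p l T j) Z)" by (intro is_tensor_tprod is_tensor_tpow l Z)
  from order_trans[OF t_contraction_norm_le[OF l T this] Suc.IH]
  show ?case by (simp add: tprod_assoc[OF l])
qed

lemma tpow_form_le:
  assumes l: "0 < l" and T: "t_contraction p l T" and Z: "is_tensor p q l Z"
  shows "tinner p q l Z (tprod p l (tpow p l T j) Z) \<le> tinner p q l Z Z"
proof (rule power2_le_imp_le)
  have "is_tensor p p l T" using T by (simp add: t_contraction_def t_psd_def tsym_def)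
  hence "is_tensor p q l (tprod p l (tpow p l T j) Z)" by (intro is_tensor_tprod is_tensor_tpow l Z)
  hence "(tinner p q l Z (tprod p l (tpow p l T j) Z))\<^sup>2
      \<le> tinner p q l Z Z * tinner p q l (tprod p l (tpow p l T j) Z) (tprod p l (tpow p l T j) Z)"
    by (rule tinner_cauchy_schwarz[OF l Z])
  also have "\<dots> \<le> (tinner p q l Z Z)\<^sup>2"
    unfolding power2_eq_square by (intro mult_left_mono tpow_norm_le[OF l T Z] tinner_self_nonneg)
  finally show "(tinner p q l Z (tprod p l (tpow p l T j) Z))\<^sup>2 \<le> (tinner p q l Z Z)\<^sup>2" .
qed (rule tinner_self_nonneg)

lemma tpow_entry_bound:
  assumes l: "0 < l" and T: "t_contraction p l T"
  shows "\<bar>tpow p l T j a b k\<bar> \<le> sqrt (tinner p p l (tid p) (tid p))"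
proof (cases "a < p \<and> b < p \<and> k < l")
  case True
  have "is_tensor p p l T" using T by (simp add: t_contraction_def t_psd_def tsym_def)
  hence "tprod p l (tpow p l T j) (tid p) = tpow p l T j"
    by (rule tprod_tid_right[OF l is_tensor_tpow[OF l]])
  hence "\<bar>tpow p l T j a b k\<bar>\<^sup>2 \<le> tinner p p l (tid p) (tid p)"
    using entry_sq_le_tinner[of a p b p k l "tpow p l T j"] True
      tpow_norm_le[OF l T is_tensor_tid[OF l], of j] by simp
  thus ?thesis by (rule real_le_rsqrt)
next
  case False
  have "is_tensor p p l T" using T by (simp add: t_contraction_def t_psd_def tsym_def)
  thus ?thesis using False is_tensor_tpow[OF l, of p T j] by (auto simp: is_tensor_def tinner_self_nonneg)
qed

lemma sum_fun_apply: "(\<Sum>i\<in>A. f i) x = (\<Sum>i\<in>A. f i x)"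
  by (induction A rule: infinite_finite_induct) auto

definition tsums :: "(nat \<Rightarrow> tensor) \<Rightarrow> tensor \<Rightarrow> bool" where
  "tsums F S \<longleftrightarrow> (\<forall>i j k. (\<lambda>n. F n i j k) sums S i j k)"

definition tsuminf :: "(nat \<Rightarrow> tensor) \<Rightarrow> tensor" where
  "tsuminf F = (\<lambda>i j k. \<Sum>n. F n i j k)"

lemma tsums_tsuminf: "(\<And>i j k. summable (\<lambda>n. F n i j k)) \<Longrightarrow> tsums F (tsuminf F)"
  by (simp add: tsums_def tsuminf_def summable_sums)

lemma tsums_unique: "tsums F S \<Longrightarrow> tsums F S' \<Longrightarrow> S = S'"
  unfolding tsums_def by (intro ext) (metis sums_unique)

lemma tsums_tprod_left:
  assumes "tsums F S"
  shows "tsums (\<lambda>n. tprod p l (F n) Z) (tprod p l S Z)"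
  unfolding tsums_def tprod_def
  using assms by (auto simp: tsums_def intro!: sums_sum sums_mult2)

lemma tsums_tinner_right:
  assumes "tsums F S"
  shows "(\<lambda>n. tinner a b c Z (F n)) sums tinner a b c Z S"
  unfolding tinner_def
  using assms by (auto simp: tsums_def intro!: sums_sum sums_mult)

lemma tsums_tprod_cauchy:
  assumes F: "\<And>i j k. summable (\<lambda>n. norm (F n i j k))"
    and G: "\<And>i j k. summable (\<lambda>n. norm (G n i j k))"
  shows "tsums (\<lambda>n. \<Sum>i\<le>n. tprod p l (F i) (G (n - i))) (tprod p l (tsuminf F) (tsuminf G))"
  unfolding tsums_def
proof (intro allI)
  fix a b k
  have "(\<lambda>n. \<Sum>t<l. \<Sum>m<p. \<Sum>i\<le>n. F i a m (csub l k t) * G (n - i) m b t)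
      sums (\<Sum>t<l. \<Sum>m<p. tsuminf F a m (csub l k t) * tsuminf G m b t)"
    unfolding tsuminf_def by (intro sums_sum Cauchy_product_sums F G)
  moreover have "(\<Sum>t<l. \<Sum>m<p. \<Sum>i\<le>n. F i a m (csub l k t) * G (n - i) m b t)
      = (\<Sum>i\<le>n. \<Sum>t<l. \<Sum>m<p. F i a m (csub l k t) * G (n - i) m b t)" for n
    by (subst sum.swap) (intro sum.cong refl sum.swap)
  ultimately show "(\<lambda>n. (\<Sum>i\<le>n. tprod p l (F i) (G (n - i))) a b k) sums tprod p l (tsuminf F) (tsuminf G) a b k"
    by (cases "k < l") (simp_all add: tprod_csub sum_fun_apply)
qed

definition sqrt_series :: "nat \<Rightarrow> nat \<Rightarrow> tensor \<Rightarrow> tensor" where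
  "sqrt_series p l T = tsuminf (\<lambda>n. tscale (sqrt_coeff n) (tpow p l T n))"

lemma summable_sqrt_series_terms:
  assumes l: "0 < l" and T: "t_contraction p l T"
  shows "summable (\<lambda>n. norm (tscale (sqrt_coeff n) (tpow p l T n) a b k))"
proof (rule summable_comparison_test'[OF summable_mult2[OF summable_sqrt_coeff]])
  fix n
  have "norm (norm (tscale (sqrt_coeff n) (tpow p l T n) a b k)) = sqrt_coeff n * \<bar>tpow p l T n a b k\<bar>"
    by (simp add: tscale_def abs_mult sqrt_coeff_nonneg)
  also have "\<dots> \<le> sqrt_coeff n * sqrt (tinner p p l (tid p) (tid p))"
    by (intro mult_left_mono tpow_entry_bound l T sqrt_coeff_nonneg)
  finally show "norm (norm (tscale (sqrt_coeff n) (tpow p l T n) a b k))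
      \<le> sqrt_coeff n * sqrt (tinner p p l (tid p) (tid p))" .
qed

lemma tsums_sqrt_series:
  assumes "0 < l" and "t_contraction p l T"
  shows "tsums (\<lambda>n. tscale (sqrt_coeff n) (tpow p l T n)) (sqrt_series p l T)"
  unfolding sqrt_series_def
  by (intro tsums_tsuminf summable_norm_cancel[OF summable_sqrt_series_terms[OF assms]])

lemma is_tensor_sqrt_series:
  assumes l: "0 < l" and T: "t_contraction p l T"
  shows "is_tensor p p l (sqrt_series p l T)"
proof -
  have "is_tensor p p l T" using T by (simp add: t_contraction_def t_psd_def tsym_def)
  thus ?thesis using is_tensor_tpow[OF l]
    by (simp add: is_tensor_def sqrt_series_def tsuminf_def tscale_def)
qed

lemma ttrans_sqrt_series:
  assumes l: "0 < l" and T: "t_contraction p l T"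
  shows "ttrans l (sqrt_series p l T) = sqrt_series p l T"
proof (intro ext)
  fix a b k
  have "tsym p l T" using T by (simp add: t_contraction_def t_psd_def)
  hence sym: "ttrans l (tpow p l T n) a b k = tpow p l T n a b k" for n
    by (simp only: ttrans_tpow[OF l])
  show "ttrans l (sqrt_series p l T) a b k = sqrt_series p l T a b k"
  proof (cases "k < l")
    case True
    have "tpow p l T n b a (csub l 0 k) = tpow p l T n a b k" for n
      using sym[of n] True by (simp add: ttrans_csub)
    thus ?thesis using True by (simp add: ttrans_csub sqrt_series_def tsuminf_def tscale_def)
  next
    case False
    thus ?thesis using is_tensor_sqrt_series[OF l T] by (simp add: ttrans_csub is_tensor_def)
  qed
qed

lemma sqrt_series_square:
  assumes l: "0 < l" and T: "t_contraction p l T"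
  shows "tprod p l (sqrt_series p l T) (sqrt_series p l T) = tscale 2 (sqrt_series p l T) - T"
proof -
  have T': "is_tensor p p l T" using T by (simp add: t_contraction_def t_psd_def tsym_def)
  define F where "F n = tscale (sqrt_coeff n) (tpow p l T n)" for n
  define d where "d n = 2 * sqrt_coeff n - (if n = 1 then 1 else 0)" for n
  have Y: "tsums F (sqrt_series p l T)"
    unfolding F_def by (rule tsums_sqrt_series[OF l T])
  have cauchy: "tsums (\<lambda>n. \<Sum>i\<le>n. tprod p l (F i) (F (n - i))) (tprod p l (sqrt_series p l T) (sqrt_series p l T))"
    unfolding sqrt_series_def F_def by (intro tsums_tprod_cauchy summable_sqrt_series_terms l T)
  have coeff: "(\<Sum>i\<le>n. tprod p l (F i) (F (n - i))) = tscale (d n) (tpow p l T n)" for n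
  proof -
    have "tprod p l (F i) (F (n - i)) = tscale (sqrt_coeff i * sqrt_coeff (n - i)) (tpow p l T n)" if "i \<le> n" for i
      using that tpow_add[OF l T', of i "n - i"]
      by (simp add: F_def tprod_tscale_left tprod_tscale_right) (simp add: tscale_def mult_ac)
    hence "(\<Sum>i\<le>n. tprod p l (F i) (F (n - i))) = (\<Sum>i\<le>n. tscale (sqrt_coeff i * sqrt_coeff (n - i)) (tpow p l T n))"
      by (intro sum.cong) auto
    also have "\<dots> = tscale (d n) (tpow p l T n)"
      by (intro ext) (simp add: sum_fun_apply tscale_def d_def sum_distrib_right[symmetric] sqrt_coeff_convolution)
    finally show ?thesis .
  qed
  have "tsums (\<lambda>n. tscale (d n) (tpow p l T n)) (tscale 2 (sqrt_series p l T) - T)"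
    unfolding tsums_def
  proof (intro allI)
    fix a b k
    have "(\<lambda>n. 2 * F n a b k - (if n = 1 then T a b k else 0)) sums (2 * sqrt_series p l T a b k - T a b k)"
      using Y by (intro sums_diff sums_mult sums_single[where f = "\<lambda>_. T a b k"]) (simp add: tsums_def)
    moreover have "tscale (d n) (tpow p l T n) a b k = 2 * F n a b k - (if n = 1 then T a b k else 0)" for n
      by (cases "n = 1") (simp_all add: F_def d_def tscale_def tprod_tid_right[OF l T'] algebra_simps)
    ultimately show "(\<lambda>n. tscale (d n) (tpow p l T n) a b k) sums (tscale 2 (sqrt_series p l T) - T) a b k"
      by (simp add: tscale_def)
  qed
  moreover have "tsums (\<lambda>n. tscale (d n) (tpow p l T n)) (tprod p l (sqrt_series p l T) (sqrt_series p l T))"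
    using cauchy by (simp only: coeff)
  ultimately show ?thesis by (rule tsums_unique[symmetric])
qed

lemma tinner_sqrt_series_le:
  assumes l: "0 < l" and T: "t_contraction p l T" and Z: "is_tensor p q l Z"
  shows "tinner p q l Z (tprod p l (sqrt_series p l T) Z) \<le> tinner p q l Z Z"
proof -
  have "(\<lambda>n. tinner p q l Z (tprod p l (tscale (sqrt_coeff n) (tpow p l T n)) Z))
      sums tinner p q l Z (tprod p l (sqrt_series p l T) Z)"
    by (intro tsums_tinner_right tsums_tprod_left tsums_sqrt_series l T)
  moreover have "(\<lambda>n. sqrt_coeff n * tinner p q l Z Z) sums (suminf sqrt_coeff * tinner p q l Z Z)"
    by (intro sums_mult2 summable_sums summable_sqrt_coeff)
  moreover have "tinner p q l Z (tprod p l (tscale (sqrt_coeff n) (tpow p l T n)) Z) \<le> sqrt_coeff n * tinner p q l Z Z" for n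
    by (simp add: tprod_tscale_left tinner_tscale_right mult_left_mono tpow_form_le[OF l T Z] sqrt_coeff_nonneg)
  ultimately have "tinner p q l Z (tprod p l (sqrt_series p l T) Z) \<le> suminf sqrt_coeff * tinner p q l Z Z"
    by (rule sums_le[rotated])
  also have "\<dots> \<le> tinner p q l Z Z"
    using mult_right_mono[OF suminf_sqrt_coeff_le_1 tinner_self_nonneg] by simp
  finally show ?thesis .
qed

lemma t_contraction_sqrt:
  assumes l: "0 < l" and T: "t_contraction p l T"
  shows "t_psd p l (tid p - sqrt_series p l T)"
    and "tprod p l (tid p - sqrt_series p l T) (tid p - sqrt_series p l T) = tid p - T"
proof -
  let ?Y = "sqrt_series p l T"
  have Y: "is_tensor p p l ?Y" by (rule is_tensor_sqrt_series[OF l T])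
  show "t_psd p l (tid p - ?Y)"
    using tinner_sqrt_series_le[OF l T]
    by (simp add: t_psd_def tsym_def is_tensor_diff is_tensor_tid l Y ttrans_diff ttrans_tid
        ttrans_sqrt_series[OF l T] tprod_diff_left tprod_tid_left[OF l] tinner_diff_right)
  have "tprod p l (tid p - ?Y) (tid p - ?Y) = tid p - ?Y - (?Y - tprod p l ?Y ?Y)"
    by (simp only: tprod_diff_left tprod_diff_right tprod_tid_left[OF l is_tensor_tid[OF l]]
        tprod_tid_left[OF l Y] tprod_tid_right[OF l Y])
  also have "\<dots> = tid p - T"
    by (intro ext) (simp add: sqrt_series_square[OF l T] tscale_def)
  finally show "tprod p l (tid p - ?Y) (tid p - ?Y) = tid p - T" .
qed

lemma tform_bounded:
  "\<exists>C. \<forall>Z. is_tensor p 1 l Z \<longrightarrow> tinner p 1 l Z (tprod p l G Z) \<le> C * tinner p 1 l Z Z"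
proof (intro exI allI impI)
  fix Z assume Z: "is_tensor p 1 l Z"
  let ?z = "tinner p 1 l Z Z"
  have "tinner p 1 l Z (tprod p l G Z) = (\<Sum>i<p. \<Sum>k<l. \<Sum>t<l. \<Sum>m<p. G i m (csub l k t) * (Z i 0 k * Z m 0 t))"
    by (simp add: tinner_def tprod_csub sum_distrib_left ac_simps)
  also have "\<dots> \<le> (\<Sum>i<p. \<Sum>k<l. \<Sum>t<l. \<Sum>m<p. \<bar>G i m (csub l k t)\<bar> * ?z)"
  proof (intro sum_mono)
    fix i k t m assume "i \<in> {..<p}" "k \<in> {..<l}" "t \<in> {..<l}" "m \<in> {..<p}"
    hence "(Z i 0 k)\<^sup>2 \<le> ?z" "(Z m 0 t)\<^sup>2 \<le> ?z" by (auto intro: entry_sq_le_tinner)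
    hence "\<bar>Z i 0 k * Z m 0 t\<bar> \<le> ?z"
      using sum_squares_bound[of "\<bar>Z i 0 k\<bar>" "\<bar>Z m 0 t\<bar>"] by (simp add: abs_mult power2_eq_square)
    have "G i m (csub l k t) * (Z i 0 k * Z m 0 t) \<le> \<bar>G i m (csub l k t)\<bar> * \<bar>Z i 0 k * Z m 0 t\<bar>"
      by (simp only: abs_mult[symmetric] abs_ge_self)
    also have "\<dots> \<le> \<bar>G i m (csub l k t)\<bar> * ?z"
      using \<open>\<bar>Z i 0 k * Z m 0 t\<bar> \<le> ?z\<close> by (rule mult_left_mono) simp
    finally show "G i m (csub l k t) * (Z i 0 k * Z m 0 t) \<le> \<bar>G i m (csub l k t)\<bar> * ?z" .
  qed
  also have "\<dots> = (\<Sum>i<p. \<Sum>k<l. \<Sum>t<l. \<Sum>m<p. \<bar>G i m (csub l k t)\<bar>) * ?z"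
    by (simp add: sum_distrib_right)
  finally show "tinner p 1 l Z (tprod p l G Z) \<le> (\<Sum>i<p. \<Sum>k<l. \<Sum>t<l. \<Sum>m<p. \<bar>G i m (csub l k t)\<bar>) * ?z" .
qed

lemma t_psd_tscale: "0 \<le> c \<Longrightarrow> t_psd p l H \<Longrightarrow> t_psd p l (tscale c H)"
  by (simp add: t_psd_def tsym_def is_tensor_tscale ttrans_tscale tprod_tscale_left tinner_tscale_right)

theorem t_psd_sqrt_exists:
  assumes l: "0 < l" and G: "t_psd p l G"
  shows "\<exists>H. t_psd p l H \<and> tprod p l H H = G"
proof -
  obtain C where C: "\<And>Z. is_tensor p 1 l Z \<Longrightarrow> tinner p 1 l Z (tprod p l G Z) \<le> C * tinner p 1 l Z Z"
    using tform_bounded by blast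
  define \<kappa> where "\<kappa> = \<bar>C\<bar> + 1"
  have \<kappa>: "0 < \<kappa>" by (simp add: \<kappa>_def add_nonneg_pos)
  define T where "T = tid p - tscale (1 / \<kappa>) G"
  have Gs: "is_tensor p p l G" "ttrans l G = G" using G by (auto simp: t_psd_def tsym_def)
  have T: "t_contraction p l T"
    unfolding t_contraction_def
  proof
    show "t_psd p l (tid p - T)" using \<kappa> G by (simp add: T_def t_psd_tscale)
    have "0 \<le> tinner p 1 l Z (tprod p l T Z)" if Z: "is_tensor p 1 l Z" for Z
    proof -
      have "C * tinner p 1 l Z Z \<le> \<kappa> * tinner p 1 l Z Z"
        unfolding \<kappa>_def by (intro mult_right_mono tinner_self_nonneg) simp
      hence "tinner p 1 l Z (tprod p l G Z) \<le> \<kappa> * tinner p 1 l Z Z"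
        using C[OF Z] by linarith
      thus ?thesis using \<kappa>
        by (simp add: T_def tprod_diff_left tprod_tid_left[OF l Z] tprod_tscale_left tinner_diff_right
            tinner_tscale_right field_simps)
    qed
    thus "t_psd p l T"
      using Gs by (simp add: t_psd_def tsym_def T_def is_tensor_diff is_tensor_tid l is_tensor_tscale
          ttrans_diff ttrans_tid ttrans_tscale)
  qed
  define H where "H = tscale (sqrt \<kappa>) (tid p - sqrt_series p l T)"
  have "t_psd p l H" unfolding H_def using \<kappa> by (intro t_psd_tscale t_contraction_sqrt(1)[OF l T]) simp
  moreover have "tprod p l H H = tscale (sqrt \<kappa>) (tscale (sqrt \<kappa>) (tid p - T))"
    by (simp add: H_def tprod_tscale_left tprod_tscale_right t_contraction_sqrt(2)[OF l T])
  moreover have "\<dots> = G"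
    using \<kappa> by (intro ext) (simp add: T_def tscale_def mult.assoc[symmetric])
  ultimately show ?thesis by auto
qed

section \<open>Block circulant matrices\<close>

definition tker_trivial :: "nat \<Rightarrow> nat \<Rightarrow> tensor \<Rightarrow> bool" where
  "tker_trivial p l A \<longleftrightarrow> (\<forall>Z. is_tensor p 1 l Z \<longrightarrow> tprod p l A Z = 0 \<longrightarrow> Z = 0)"

lemma tker_trivial_tprod_eq_0:
  assumes "tker_trivial p l H" and D: "is_tensor p q l D" and "tprod p l H D = 0"
  shows "D = 0"
proof (intro ext)
  fix i j k
  have "tprod p l H (tcol j D) = 0"
    using assms(3) by (simp add: tprod_tcol) (simp add: tcol_def zero_fun_def)
  hence "tcol j D = 0" using assms(1) is_tensor_tcol[OF D] by (simp add: tker_trivial_def)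
  hence "tcol j D i 0 k = 0" by simp
  thus "D i j k = 0 i j k" by (simp add: tcol_def)
qed

text \<open>A p x 1 x l tensor Z is unfolded into the vector with entry Z i 0 k at position
  k * p + i; then tprod becomes multiplication by the block circulant matrix bcirc_mat.\<close>

definition tvec :: "nat \<Rightarrow> nat \<Rightarrow> tensor \<Rightarrow> real vec" where
  "tvec p l Z = vec (p * l) (\<lambda>r. Z (r mod p) 0 (r div p))"

definition vec_tensor :: "nat \<Rightarrow> nat \<Rightarrow> real vec \<Rightarrow> tensor" where
  "vec_tensor p l v = (\<lambda>i j k. if i < p \<and> j = 0 \<and> k < l then v $ (k * p + i) else 0)"

definition bcirc_mat :: "nat \<Rightarrow> nat \<Rightarrow> tensor \<Rightarrow> real mat" where
  "bcirc_mat p l H = mat (p * l) (p * l) (\<lambda>(r, c). H (r mod p) (c mod p) (csub l (r div p) (c div p)))"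

lemma index_mult_add_less: "t < l \<Longrightarrow> m < p \<Longrightarrow> t * p + m < p * (l::nat)"
proof -
  assume "t < l" "m < p"
  hence "t * p + m < (t + 1) * p" by simp
  also have "\<dots> \<le> l * p" using \<open>t < l\<close> by (intro mult_right_mono) auto
  finally show ?thesis by (simp add: mult.commute)
qed

lemma sum_split_blocks:
  assumes "0 < (p::nat)"
  shows "(\<Sum>r<p * l. f r) = (\<Sum>t<l. \<Sum>m<p. (f (t * p + m) :: real))"
proof -
  have "(\<Sum>r<p * l. f r) = (\<Sum>x\<in>{..<l} \<times> {..<p}. f (fst x * p + snd x))"
    by (rule sum.reindex_bij_witness[where i = "\<lambda>x. fst x * p + snd x" and j = "\<lambda>r. (r div p, r mod p)"])
      (use assms index_mult_add_less in \<open>auto simp: less_mult_imp_div_less mult.commute[of l p]\<close>)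
  thus ?thesis by (simp add: sum.cartesian_product split_beta)
qed

lemma tvec_carrier: "tvec p l Z \<in> carrier_vec (p * l)"
  by (simp add: tvec_def)

lemma bcirc_mat_carrier: "bcirc_mat p l H \<in> carrier_mat (p * l) (p * l)"
  by (simp add: bcirc_mat_def)

lemma bcirc_mat_mult_tvec:
  assumes p: "0 < p" and l: "0 < l"
  shows "bcirc_mat p l H *\<^sub>v tvec p l Z = tvec p l (tprod p l H Z)"
proof (rule eq_vecI)
  fix r assume "r < dim_vec (tvec p l (tprod p l H Z))"
  hence r: "r < p * l" by (simp add: tvec_def)
  have "(bcirc_mat p l H *\<^sub>v tvec p l Z) $ r
      = (\<Sum>c<p * l. H (r mod p) (c mod p) (csub l (r div p) (c div p)) * Z (c mod p) 0 (c div p))"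
    using r by (simp add: bcirc_mat_def tvec_def scalar_prod_def atLeast0LessThan)
  also have "\<dots> = (\<Sum>t<l. \<Sum>m<p. H (r mod p) m (csub l (r div p) t) * Z m 0 t)"
    by (subst sum_split_blocks[OF p]) simp
  also have "\<dots> = tvec p l (tprod p l H Z) $ r"
    using r by (simp add: tvec_def tprod_csub less_mult_imp_div_less mult.commute)
  finally show "(bcirc_mat p l H *\<^sub>v tvec p l Z) $ r = tvec p l (tprod p l H Z) $ r" .
qed (simp add: bcirc_mat_def tvec_def)

lemma is_tensor_vec_tensor: "is_tensor p 1 l (vec_tensor p l v)"
  by (simp add: is_tensor_def vec_tensor_def)

lemma tvec_vec_tensor:
  assumes "0 < p" and "v \<in> carrier_vec (p * l)"
  shows "tvec p l (vec_tensor p l v) = v"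
  by (rule eq_vecI) (use assms in \<open>auto simp: tvec_def vec_tensor_def less_mult_imp_div_less mult.commute\<close>)

lemma tvec_inject:
  assumes Z: "is_tensor p 1 l Z" and W: "is_tensor p 1 l W"
  shows "tvec p l Z = tvec p l W \<longleftrightarrow> Z = W"
proof
  assume e: "tvec p l Z = tvec p l W"
  show "Z = W"
  proof (rule tensor_eqI[OF Z W])
    fix i j k :: nat assume "i < p" "j < 1" "k < l"
    hence "k * p + i < p * l" by (intro index_mult_add_less)
    thus "Z i j k = W i j k"
      using arg_cong[OF e, of "\<lambda>v. v $ (k * p + i)"] \<open>i < p\<close> \<open>j < 1\<close> by (simp add: tvec_def)
  qed
qed simp

lemma tvec_zero: "tvec p l 0 = 0\<^sub>v (p * l)"
  by (simp add: tvec_def zero_vec_def)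

lemma tvec_tscale: "tvec p l (tscale x Z) = x \<cdot>\<^sub>v tvec p l Z"
  by (intro eq_vecI) (simp_all add: tvec_def tscale_def)

lemma tvec_eq_0_iff: "is_tensor p 1 l Z \<Longrightarrow> tvec p l Z = 0\<^sub>v (p * l) \<longleftrightarrow> Z = 0"
  using tvec_inject[of p l Z 0] by (simp add: is_tensor_zero tvec_zero)

lemma det_bcirc_mat_nonzero:
  assumes p: "0 < p" and l: "0 < l" and H: "is_tensor p p l H" and ker: "tker_trivial p l H"
  shows "det (bcirc_mat p l H) \<noteq> 0"
proof
  assume "det (bcirc_mat p l H) = 0"
  then obtain v where v: "v \<in> carrier_vec (p * l)" "v \<noteq> 0\<^sub>v (p * l)" "bcirc_mat p l H *\<^sub>v v = 0\<^sub>v (p * l)"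
    using det_0_iff_vec_prod_zero_field[OF bcirc_mat_carrier] by blast
  define Z where "Z = vec_tensor p l v"
  have Z: "is_tensor p 1 l Z" unfolding Z_def by (rule is_tensor_vec_tensor)
  have v_eq: "tvec p l Z = v" unfolding Z_def by (rule tvec_vec_tensor[OF p v(1)])
  have "tvec p l (tprod p l H Z) = 0\<^sub>v (p * l)"
    using bcirc_mat_mult_tvec[OF p l, of H Z] v(3) v_eq by simp
  hence "Z = 0"
    using ker Z tvec_eq_0_iff[OF is_tensor_tprod[OF H Z]] by (simp add: tker_trivial_def)
  thus False using v(2) v_eq tvec_zero by simp
qed

lemma tker_trivial_surj:
  assumes p: "0 < p" and l: "0 < l" and H: "is_tensor p p l H" and ker: "tker_trivial p l H"
    and W: "is_tensor p 1 l W"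
  shows "\<exists>Z. is_tensor p 1 l Z \<and> tprod p l H Z = W"
proof -
  let ?M = "bcirc_mat p l H"
  have M: "?M \<in> carrier_mat (p * l) (p * l)" by (rule bcirc_mat_carrier)
  have "?M \<in> Units (ring_mat TYPE(real) (p * l) undefined)"
    by (rule det_non_zero_imp_unit[OF M det_bcirc_mat_nonzero[OF p l H ker]])
  then obtain B where B: "B \<in> carrier_mat (p * l) (p * l)" "?M * B = 1\<^sub>m (p * l)"
    unfolding Units_def ring_mat_def by auto
  define v where "v = B *\<^sub>v tvec p l W"
  have v: "v \<in> carrier_vec (p * l)" unfolding v_def by (rule mult_mat_vec_carrier[OF B(1) tvec_carrier])
  define Z where "Z = vec_tensor p l v"
  have Z: "is_tensor p 1 l Z" unfolding Z_def by (rule is_tensor_vec_tensor)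
  have "tvec p l (tprod p l H Z) = ?M *\<^sub>v v"
    by (simp add: bcirc_mat_mult_tvec[OF p l, symmetric] Z_def tvec_vec_tensor[OF p v])
  also have "\<dots> = (?M * B) *\<^sub>v tvec p l W"
    unfolding v_def by (rule assoc_mult_mat_vec[symmetric, OF M B(1) tvec_carrier])
  also have "\<dots> = tvec p l W" using B(2) by (simp add: tvec_carrier)
  finally have "tprod p l H Z = W" using tvec_inject[OF is_tensor_tprod[OF H Z] W] by simp
  thus ?thesis using Z by blast
qed

lemma tker_trivial_inverse:
  assumes p: "0 < p" and l: "0 < l" and H: "is_tensor p p l H" and ker: "tker_trivial p l H"
  shows "\<exists>K. is_tensor p p l K \<and> tprod p l H K = tid p \<and> tprod p l K H = tid p"
proof -
  have "\<exists>Z. is_tensor p 1 l Z \<and> tprod p l H Z = tcol j (tid p)" for j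
    by (rule tker_trivial_surj[OF p l H ker is_tensor_tcol[OF is_tensor_tid[OF l]]])
  then obtain F where F: "\<And>j. is_tensor p 1 l (F j)" "\<And>j. tprod p l H (F j) = tcol j (tid p)"
    by metis
  define K where "K = (\<lambda>i j k. if j < p then F j i 0 k else 0)"
  have K: "is_tensor p p l K" using F(1) by (simp add: K_def is_tensor_def)
  have "tcol j K = F j" if "j < p" for j
    using F(1)[of j] that by (intro ext) (auto simp: tcol_def K_def is_tensor_def)
  hence col: "tcol j (tprod p l H K) = tcol j (tid p)" if "j < p" for j
    using that by (simp add: tprod_tcol[symmetric] F(2))
  have HK: "tprod p l H K = tid p"
  proof (rule tensor_eqI[OF is_tensor_tprod[OF H K] is_tensor_tid[OF l]])
    fix i j k assume "j < p"
    from col[OF this] have "tcol j (tprod p l H K) i 0 k = tcol j (tid p) i 0 k" by simp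
    thus "tprod p l H K i j k = tid p i j k" by (simp add: tcol_def)
  qed
  have "tprod p l H (tprod p l K H - tid p) = 0"
    by (simp add: tprod_diff_right tprod_assoc[OF l, symmetric] HK tprod_tid_left[OF l H]
        tprod_tid_right[OF l H])
  hence "tprod p l K H - tid p = 0"
    by (rule tker_trivial_tprod_eq_0[OF ker is_tensor_diff[OF is_tensor_tprod[OF K H] is_tensor_tid[OF l]]])
  thus ?thesis using K HK by auto
qed

lemma finite_teigenvalues:
  assumes p: "0 < p" and l: "0 < l"
  shows "finite {x. \<exists>Z. is_tensor p 1 l Z \<and> Z \<noteq> 0 \<and> tprod p l B Z = tscale x Z}"
proof -
  let ?M = "bcirc_mat p l B"
  have M: "?M \<in> carrier_mat (p * l) (p * l)" by (rule bcirc_mat_carrier)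
  have "{x. \<exists>Z. is_tensor p 1 l Z \<and> Z \<noteq> 0 \<and> tprod p l B Z = tscale x Z} \<subseteq> {x. poly (char_poly ?M) x = 0}"
  proof safe
    fix x Z assume Z: "is_tensor p 1 l Z" "Z \<noteq> 0" "tprod p l B Z = tscale x Z"
    have "?M *\<^sub>v tvec p l Z = x \<cdot>\<^sub>v tvec p l Z"
      using Z(3) by (simp add: bcirc_mat_mult_tvec[OF p l] tvec_tscale)
    hence "eigenvalue ?M x"
      using Z(1,2) tvec_eq_0_iff[OF Z(1)] tvec_carrier[of p l Z] M
      unfolding eigenvalue_def eigenvector_def by auto
    thus "poly (char_poly ?M) x = 0" using eigenvalue_root_char_poly[OF M] by simp
  qed
  moreover have "char_poly ?M \<noteq> 0" using degree_monic_char_poly[OF M] by auto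
  ultimately show ?thesis using poly_roots_finite finite_subset by blast
qed

section \<open>Polar decomposition\<close>

lemma tprod_stiefel_cancel:
  assumes l: "0 < l" and P: "P \<in> Stiefel n p l" and X: "is_tensor p q l X"
  shows "tprod n l (ttrans l P) (tprod p l P X) = X"
  using P by (simp add: tprod_assoc[OF l, symmetric] Stiefel_def tprod_tid_left[OF l X])

lemma gram_tprod_stiefel:
  assumes l: "0 < l" and P: "P \<in> Stiefel n p l" and H: "tsym p l H"
  shows "tprod n l (ttrans l (tprod p l P H)) (tprod p l P H) = tprod p l H H"
  using H tprod_stiefel_cancel[OF l P, of p H]
  by (simp add: ttrans_tprod[OF l] tprod_assoc[OF l] tsym_def)

lemma t_pd_of_t_psd_tker_trivial:
  assumes l: "0 < l" and H: "t_psd p l H" and ker: "tker_trivial p l H"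
  shows "t_pd p l H"
  unfolding t_pd_def tensor_zero_eq
proof (intro conjI allI impI)
  show "tsym p l H" using H by (simp add: t_psd_def)
  fix Z assume Z: "is_tensor p 1 l Z" and "Z \<noteq> 0"
  hence "tprod p l H Z \<noteq> 0" using ker by (auto simp: tker_trivial_def)
  hence "tinner p 1 l Z (tprod p l H Z) \<noteq> 0" using t_psd_form_eq_0_imp[OF l H Z] by blast
  thus "0 < tinner p 1 l Z (tprod p l H Z)" using t_psd_tinner_nonneg[OF H Z] by simp
qed

lemma polar_exists_of_tker_trivial:
  assumes p: "0 < p" and l: "0 < l" and A: "is_tensor n p l A" and kerA: "tker_trivial p l A"
  shows "\<exists>P H. P \<in> Stiefel n p l \<and> t_psd p l H \<and> A = tprod p l P H"
proof -
  define G where "G = tprod n l (ttrans l A) A"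
  obtain H where H: "t_psd p l H" and HH: "tprod p l H H = G"
    using t_psd_sqrt_exists[OF l t_psd_gram[OF l A]] by (auto simp: G_def)
  have Ht: "is_tensor p p l H" and Hs: "ttrans l H = H" using H by (auto simp: t_psd_def tsym_def)
  have "tker_trivial p l H"
    unfolding tker_trivial_def
  proof (intro allI impI)
    fix Z assume Z: "is_tensor p 1 l Z" and "tprod p l H Z = 0"
    hence "tprod p l G Z = 0" by (simp add: HH[symmetric] tprod_assoc[OF l] tprod_zero_right)
    hence "tinner n 1 l (tprod p l A Z) (tprod p l A Z) = 0"
      using tinner_gram[OF l A, of 1 Z] by (simp add: G_def tinner_zero_right)
    thus "Z = 0" using kerA Z tinner_self_eq_0_iff[OF is_tensor_tprod[OF A Z]]
      by (simp add: tker_trivial_def)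
  qed
  then obtain K where K: "is_tensor p p l K" and HK: "tprod p l H K = tid p" and KH: "tprod p l K H = tid p"
    using tker_trivial_inverse[OF p l Ht] by blast
  have KtH: "tprod p l (ttrans l K) H = tid p"
    using arg_cong[OF HK, of "ttrans l"] by (simp add: ttrans_tprod[OF l] Hs ttrans_tid[OF l])
  define P where "P = tprod p l A K"
  have "tprod n l (ttrans l P) P = tprod p l (ttrans l K) (tprod p l G K)"
    by (simp add: P_def G_def ttrans_tprod[OF l] tprod_assoc[OF l])
  also have "\<dots> = tid p"
    by (simp add: HH[symmetric] tprod_assoc[OF l, symmetric] KtH HK)
      (simp add: tprod_tid_left[OF l Ht] HK)
  finally have "P \<in> Stiefel n p l"
    by (simp add: Stiefel_def P_def is_tensor_tprod[OF A K])
  moreover have "A = tprod p l P H"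
    by (simp add: P_def tprod_assoc[OF l] KH tprod_tid_right[OF l A])
  ultimately show ?thesis using H by blast
qed

definition tconv :: "(nat \<Rightarrow> tensor) \<Rightarrow> tensor \<Rightarrow> bool" where
  "tconv X A \<longleftrightarrow> (\<forall>i j k. (\<lambda>m. X m i j k) \<longlonglongrightarrow> A i j k)"

lemma tconv_const: "tconv (\<lambda>m. A) A"
  by (simp add: tconv_def)

lemma tconv_tprod: "tconv A A' \<Longrightarrow> tconv B B' \<Longrightarrow> tconv (\<lambda>m. tprod p l (A m) (B m)) (tprod p l A' B')"
  unfolding tconv_def tprod_def by (auto intro!: tendsto_sum tendsto_mult)

lemma tconv_ttrans: "tconv A A' \<Longrightarrow> tconv (\<lambda>m. ttrans l (A m)) (ttrans l A')"
  unfolding tconv_def ttrans_def by auto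

lemma tconv_tinner: "tconv A A' \<Longrightarrow> tconv B B' \<Longrightarrow> (\<lambda>m. tinner a b c (A m) (B m)) \<longlonglongrightarrow> tinner a b c A' B'"
  unfolding tconv_def tinner_def by (auto intro!: tendsto_sum tendsto_mult)

lemma tconv_add_tscale:
  assumes "e \<longlonglongrightarrow> 0"
  shows "tconv (\<lambda>m. A + tscale (e m) E) A"
  unfolding tconv_def tscale_def
proof (intro allI)
  fix i j k
  have "(\<lambda>m. A i j k + e m * E i j k) \<longlonglongrightarrow> A i j k + 0 * E i j k"
    by (intro tendsto_intros assms)
  thus "(\<lambda>m. (A + (\<lambda>i j k. e m * E i j k)) i j k) \<longlonglongrightarrow> A i j k" by simp
qed

lemma tconv_unique: "tconv X A \<Longrightarrow> tconv X B \<Longrightarrow> A = B"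
  unfolding tconv_def by (intro ext) (blast intro: LIMSEQ_unique)

lemma tconv_subseq: "tconv X A \<Longrightarrow> strict_mono r \<Longrightarrow> tconv (X \<circ> r) A"
  unfolding tconv_def using LIMSEQ_subseq_LIMSEQ by (fastforce simp: o_def)

lemma is_tensor_tconv:
  assumes "tconv X A" and "\<And>m. is_tensor n p l (X m)"
  shows "is_tensor n p l A"
  unfolding is_tensor_def
proof (intro allI impI)
  fix i j k assume "n \<le> i \<or> p \<le> j \<or> l \<le> k"
  hence "(\<lambda>m. X m i j k) = (\<lambda>m. 0)" using assms(2) by (auto simp: is_tensor_def)
  thus "A i j k = 0" using assms(1) LIMSEQ_unique[OF _ tendsto_const] by (metis tconv_def)
qed

lemma t_psd_tconv:
  assumes H: "tconv Hs H" and psd: "\<And>m. t_psd p l (Hs m)"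
  shows "t_psd p l H"
  unfolding t_psd_def tsym_def
proof (intro conjI allI impI)
  show "is_tensor p p l H" using psd by (intro is_tensor_tconv[OF H]) (simp add: t_psd_def tsym_def)
  have "(\<lambda>m. ttrans l (Hs m)) = Hs" using psd by (simp add: t_psd_def tsym_def)
  thus "ttrans l H = H" using tconv_ttrans[OF H, of l] by (auto intro: tconv_unique[OF _ H])
  fix Z assume "is_tensor p 1 l Z"
  hence "0 \<le> tinner p 1 l Z (tprod p l (Hs m) Z)" for m using psd by (simp add: t_psd_def)
  thus "0 \<le> tinner p 1 l Z (tprod p l H Z)"
    by (intro LIMSEQ_le_const[OF tconv_tinner[OF tconv_const tconv_tprod[OF H tconv_const]]]) simp
qed

lemma Stiefel_tconv:
  assumes l: "0 < l" and P: "tconv Ps P" and St: "\<And>m. Ps m \<in> Stiefel n p l"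
  shows "P \<in> Stiefel n p l"
proof -
  have "is_tensor n p l P" using St by (intro is_tensor_tconv[OF P]) (simp add: Stiefel_def)
  have "tconv (\<lambda>m. tprod n l (ttrans l (Ps m)) (Ps m)) (tid p)"
    using St by (simp add: Stiefel_def tconv_const)
  hence "tprod n l (ttrans l P) P = tid p"
    by (rule tconv_unique[OF tconv_tprod[OF tconv_ttrans[OF P] P]])
  with \<open>is_tensor n p l P\<close> show ?thesis by (simp add: Stiefel_def)
qed

lemma Stiefel_entry_bound:
  assumes l: "0 < l" and P: "P \<in> Stiefel n p l"
  shows "\<bar>P i j k\<bar> \<le> 1"
proof (cases "i < n \<and> j < p \<and> k < l")
  case True
  have "(P i j k)\<^sup>2 \<le> (\<Sum>m<n. P m j k * P m j k)"
    using True member_le_sum[of i "{..<n}" "\<lambda>m. P m j k * P m j k"] by (simp add: power2_eq_square)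
  also have "\<dots> \<le> (\<Sum>s<l. \<Sum>m<n. P m j s * P m j s)"
    using True member_le_sum[of k "{..<l}" "\<lambda>s. \<Sum>m<n. P m j s * P m j s"] by (simp add: sum_nonneg)
  also have "\<dots> = tprod n l (ttrans l P) P j j 0"
    using l by (simp add: tprod_csub ttrans_csub csub_less csub_csub_self)
  also have "\<dots> = 1" using P True by (simp add: Stiefel_def tid_def)
  finally show ?thesis by (simp add: abs_square_le_1)
qed (use P in \<open>auto simp: Stiefel_def is_tensor_def\<close>)

lemma bounded_convergent_subseq:
  fixes f :: "nat \<Rightarrow> 'a \<Rightarrow> real"
  assumes "finite I" and bound: "\<And>m x. \<bar>f m x\<bar> \<le> B"
  shows "\<exists>r. strict_mono r \<and> (\<forall>x\<in>I. convergent (\<lambda>m. f (r m) x))"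
  using assms(1)
proof (induction I rule: finite_induct)
  case empty
  have "strict_mono (\<lambda>m::nat. m)" by (simp add: strict_mono_def)
  thus ?case by blast
next
  case (insert x I)
  then obtain r where r: "strict_mono r" "\<forall>y\<in>I. convergent (\<lambda>m. f (r m) y)" by blast
  obtain s where s: "strict_mono s" "monoseq (\<lambda>m. f (r (s m)) x)"
    using seq_monosub[of "\<lambda>m. f (r m) x"] by blast
  have "Bseq (\<lambda>m. f (r (s m)) x)" by (rule BseqI'[of _ B]) (simp add: bound)
  hence "convergent (\<lambda>m. f (r (s m)) x)" using s(2) by (rule Bseq_monoseq_convergent)
  moreover have "convergent (\<lambda>m. f (r (s m)) y)" if "y \<in> I" for y
    using convergent_subseq_convergent[OF r(2)[rule_format, OF that] s(1)] by (simp add: o_def)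
  moreover have "strict_mono (\<lambda>m. r (s m))" by (rule strict_mono_compose[OF r(1) s(1)])
  ultimately show ?case by blast
qed

lemma Stiefel_convergent_subseq:
  fixes Ps :: "nat \<Rightarrow> tensor"
  assumes l: "0 < l" and St: "\<And>m. Ps m \<in> Stiefel n p l"
  shows "\<exists>r P. strict_mono r \<and> P \<in> Stiefel n p l \<and> tconv (Ps \<circ> r) P"
proof -
  define I where "I = {..<n} \<times> {..<p} \<times> {..<l}"
  obtain r where r: "strict_mono r" and conv: "\<forall>(i, j, k)\<in>I. convergent (\<lambda>m. Ps (r m) i j k)"
    using bounded_convergent_subseq[of I "\<lambda>m (i, j, k). Ps m i j k" 1]
      Stiefel_entry_bound[OF l St] by (auto simp: I_def split_beta)
  define P where "P i j k = (if (i, j, k) \<in> I then lim (\<lambda>m. Ps (r m) i j k) else 0)" for i j k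
  have "tconv (Ps \<circ> r) P"
    unfolding tconv_def
  proof (intro allI)
    fix i j k
    show "(\<lambda>m. (Ps \<circ> r) m i j k) \<longlonglongrightarrow> P i j k"
    proof (cases "(i, j, k) \<in> I")
      case True
      thus ?thesis using conv by (auto simp: P_def convergent_LIMSEQ_iff)
    next
      case False
      hence "(\<lambda>m. (Ps \<circ> r) m i j k) = (\<lambda>m. 0)"
        using St by (auto simp: I_def Stiefel_def is_tensor_def)
      thus ?thesis using False by (simp add: P_def)
    qed
  qed
  moreover have "P \<in> Stiefel n p l"
    using St by (intro Stiefel_tconv[OF l \<open>tconv (Ps \<circ> r) P\<close>]) simp
  ultimately show ?thesis using r by blast
qed

lemma tid_Stiefel:
  assumes l: "0 < l" and "p \<le> n"
  shows "tid p \<in> Stiefel n p l"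
proof -
  have inner: "(\<Sum>m<n. tid p i m s * tid p m j t) = (\<Sum>m<p. tid p i m s * tid p m j t)" for i j s t
    using \<open>p \<le> n\<close> by (intro sum.mono_neutral_right) (auto simp: tid_def)
  have "tprod n l (tid p) (tid p) = tprod p l (tid p) (tid p)" unfolding tprod_def inner ..
  hence "tprod n l (ttrans l (tid p)) (tid p) = tid p"
    by (simp add: ttrans_tid[OF l] tprod_tid_left[OF l is_tensor_tid[OF l]])
  moreover have "is_tensor n p l (tid p)" using \<open>p \<le> n\<close> l by (auto simp: is_tensor_def tid_def)
  ultimately show ?thesis by (simp add: Stiefel_def)
qed

lemma finite_tker_nontrivial_perturbation:
  assumes p: "0 < p" and l: "0 < l" and "p \<le> n"
  shows "finite {x. \<not> tker_trivial p l (A + tscale x (tid p))}"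
proof -
  define B where "B = tprod n l (ttrans l (tid p)) A"
  have E: "tid p \<in> Stiefel n p l" by (rule tid_Stiefel[OF l \<open>p \<le> n\<close>])
  have "{x. \<not> tker_trivial p l (A + tscale x (tid p))}
      \<subseteq> uminus ` {x. \<exists>Z. is_tensor p 1 l Z \<and> Z \<noteq> 0 \<and> tprod p l B Z = tscale x Z}"
  proof
    fix x assume "x \<in> {x. \<not> tker_trivial p l (A + tscale x (tid p))}"
    then obtain Z where Z: "is_tensor p 1 l Z" "Z \<noteq> 0" and "tprod p l (A + tscale x (tid p)) Z = 0"
      by (auto simp: tker_trivial_def)
    hence "tprod n l (ttrans l (tid p)) (tprod p l (A + tscale x (tid p)) Z) = 0"
      by (simp add: tprod_zero_right)
    hence "tprod p l B Z + tscale x Z = 0"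
      using tprod_stiefel_cancel[OF l E Z(1)]
      by (simp add: B_def tprod_add_left tprod_add_right tprod_tscale_left tprod_tscale_right
          tprod_assoc[OF l])
    hence "tprod p l B Z = tscale (- x) Z" by (simp add: tscale_def fun_eq_iff add_eq_0_iff)
    thus "x \<in> uminus ` {x. \<exists>Z. is_tensor p 1 l Z \<and> Z \<noteq> 0 \<and> tprod p l B Z = tscale x Z}"
      using Z by (auto intro!: image_eqI[of x uminus "- x"])
  qed
  thus ?thesis by (rule finite_subset) (intro finite_imageI finite_teigenvalues[OF p l])
qed

lemma null_sequence_avoiding_finite:
  fixes S :: "real set"
  assumes "finite S"
  shows "\<exists>e. e \<longlonglongrightarrow> 0 \<and> (\<forall>m. e m \<notin> S)"
proof -
  have "inj (\<lambda>k::nat. inverse (real (Suc k)))" by (auto simp: inj_def)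
  hence "finite ((\<lambda>k::nat. inverse (real (Suc k))) -` S)" by (rule finite_vimageI[OF assms])
  then obtain K where K: "\<forall>k \<in> (\<lambda>k::nat. inverse (real (Suc k))) -` S. k < K"
    using finite_nat_set_iff_bounded by blast
  define e where "e m = inverse (real (Suc (m + K)))" for m
  have "e \<longlonglongrightarrow> 0"
    unfolding e_def by (rule LIMSEQ_ignore_initial_segment[OF LIMSEQ_inverse_real_of_nat])
  moreover have "e m \<notin> S" for m
  proof
    assume "e m \<in> S"
    hence "m + K \<in> (\<lambda>k::nat. inverse (real (Suc k))) -` S" by (simp add: e_def)
    thus False using K by auto
  qed
  ultimately show ?thesis by blast
qed

theorem polar_exists:
  assumes p: "0 < p" and l: "0 < l" and "p \<le> n" and A: "is_tensor n p l A"
  shows "\<exists>P H. P \<in> Stiefel n p l \<and> t_psd p l H \<and> A = tprod p l P H"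
proof -
  obtain e where e: "e \<longlonglongrightarrow> 0" and ker: "\<And>m. tker_trivial p l (A + tscale (e m) (tid p))"
    using null_sequence_avoiding_finite[OF finite_tker_nontrivial_perturbation[OF p l \<open>p \<le> n\<close>]]
    by blast
  define As where "As m = A + tscale (e m) (tid p)" for m
  have As: "is_tensor n p l (As m)" for m
    using A tid_Stiefel[OF l \<open>p \<le> n\<close>] by (simp add: As_def Stiefel_def is_tensor_add is_tensor_tscale)
  have "\<forall>m. \<exists>P H. P \<in> Stiefel n p l \<and> t_psd p l H \<and> As m = tprod p l P H"
    using polar_exists_of_tker_trivial[OF p l As] ker by (simp add: As_def)
  then obtain Ps Hs where St: "\<And>m. Ps m \<in> Stiefel n p l" and psd: "\<And>m. t_psd p l (Hs m)"
    and AsPH: "\<And>m. As m = tprod p l (Ps m) (Hs m)"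
    by metis
  have Hs: "Hs m = tprod n l (ttrans l (Ps m)) (As m)" for m
    using tprod_stiefel_cancel[OF l St, of p "Hs m"] psd[of m] by (simp add: AsPH t_psd_def tsym_def)
  obtain r P where r: "strict_mono r" and P: "P \<in> Stiefel n p l" and PsP: "tconv (Ps \<circ> r) P"
    using Stiefel_convergent_subseq[where Ps = Ps, OF l St] by blast
  have AsA: "tconv (As \<circ> r) A"
    unfolding As_def by (intro tconv_subseq[OF tconv_add_tscale[OF e] r])
  define H where "H = tprod n l (ttrans l P) A"
  have HsH: "tconv (Hs \<circ> r) H"
    using tconv_tprod[OF tconv_ttrans[OF PsP] AsA] by (simp add: H_def Hs o_def)
  have "tconv (As \<circ> r) (tprod p l P H)"
    using tconv_tprod[OF PsP HsH] by (simp add: AsPH o_def)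
  hence "A = tprod p l P H" by (rule tconv_unique[OF AsA])
  moreover have "t_psd p l H"
    by (rule t_psd_tconv[OF HsH]) (simp add: psd)
  ultimately show ?thesis using P by blast
qed

lemma polar_square:
  assumes "0 < l" and "P \<in> Stiefel n p l" and "t_psd p l H" and "A = tprod p l P H"
  shows "tprod p l H H = tprod n l (ttrans l A) A"
  using gram_tprod_stiefel[OF assms(1,2)] assms(3,4) by (simp add: t_psd_def)

lemma tker_trivial_of_t_pd_square:
  assumes l: "0 < l" and pd: "t_pd p l (tprod p l H H)"
  shows "tker_trivial p l H"
  unfolding tker_trivial_def
proof (intro allI impI)
  fix Z assume Z: "is_tensor p 1 l Z" and "tprod p l H Z = 0"
  hence "tinner p 1 l Z (tprod p l (tprod p l H H) Z) = 0"
    by (simp add: tprod_assoc[OF l] tprod_zero_right tinner_zero_right)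
  thus "Z = 0" using pd Z by (auto simp: t_pd_def tensor_zero_eq)
qed

lemma polar_factor_unique:
  assumes l: "0 < l" and ker: "tker_trivial p l H" and H: "tsym p l H"
    and P: "is_tensor n p l P" and P': "is_tensor n p l P'"
    and eq: "tprod p l P H = tprod p l P' H"
  shows "P = P'"
proof -
  have "tprod p l H (ttrans l (P - P')) = ttrans l (tprod p l (P - P') H)"
    using H by (simp add: ttrans_tprod[OF l] tsym_def)
  also have "\<dots> = 0" by (simp add: tprod_diff_left eq ttrans_zero)
  finally have "ttrans l (P - P') = 0"
    by (rule tker_trivial_tprod_eq_0[OF ker is_tensor_ttrans[OF is_tensor_diff[OF P P']]])
  hence "P - P' = 0"
    using ttrans_ttrans[OF l is_tensor_diff[OF P P']] by (simp add: ttrans_zero)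
  thus ?thesis by simp
qed

lemma polar_psd_factor_unique:
  assumes l: "0 < l"
    and PH: "P \<in> Stiefel n p l" "t_psd p l H" "A = tprod p l P H"
    and PH': "P' \<in> Stiefel n p l" "t_psd p l H'" "A = tprod p l P' H'"
  shows "H = H'"
  using t_psd_sqrt_unique[OF l PH(2) PH'(2)] polar_square[OF l PH] polar_square[OF l PH'] by simp

lemma polar_t_pd:
  assumes l: "0 < l" and pd: "t_pd p l (tprod n l (ttrans l A) A)"
    and PH: "P \<in> Stiefel n p l" "t_psd p l H" "A = tprod p l P H"
  shows "tker_trivial p l H" and "t_pd p l H"
proof -
  show ker: "tker_trivial p l H"
    using pd polar_square[OF l PH] by (simp add: tker_trivial_of_t_pd_square[OF l])
  show "t_pd p l H" by (rule t_pd_of_t_psd_tker_trivial[OF l PH(2) ker])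
qed

lemma polar_stiefel_factor_unique:
  assumes l: "0 < l" and pd: "t_pd p l (tprod n l (ttrans l A) A)"
    and PH: "P \<in> Stiefel n p l" "t_psd p l H" "A = tprod p l P H"
    and PH': "P' \<in> Stiefel n p l" "t_psd p l H'" "A = tprod p l P' H'"
  shows "P = P'"
proof (rule polar_factor_unique[OF l polar_t_pd(1)[OF l pd PH]])
  show "tsym p l H" using PH(2) by (simp add: t_psd_def)
  show "is_tensor n p l P" "is_tensor n p l P'" using PH(1) PH'(1) by (simp_all add: Stiefel_def)
  show "tprod p l P H = tprod p l P' H"
    using PH(3) PH'(3) polar_psd_factor_unique[OF l PH PH'] by simp
qed

theorem mainTheorem15:
  fixes n p l :: nat and A :: tensor
  assumes "0 < p" and "0 < l" and "p \<le> n" and "is_tensor n p l A"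
  shows "(\<exists>!H. t_psd p l H \<and> (\<exists>P \<in> Stiefel n p l. A = tprod p l P H))
    \<and> (t_pd p l (tprod n l (ttrans l A) A) \<longrightarrow>
         (\<exists>!P. P \<in> Stiefel n p l \<and> (\<exists>H. t_psd p l H \<and> A = tprod p l P H))
         \<and> (\<forall>P H. P \<in> Stiefel n p l \<and> t_psd p l H \<and> A = tprod p l P H \<longrightarrow> t_pd p l H))"
proof (intro conjI impI)
  note l = \<open>0 < l\<close>
  obtain P0 H0 where polar0: "P0 \<in> Stiefel n p l" "t_psd p l H0" "A = tprod p l P0 H0"
    using polar_exists[OF assms] by blast
  show "\<exists>!H. t_psd p l H \<and> (\<exists>P \<in> Stiefel n p l. A = tprod p l P H)"
    using polar0 polar_psd_factor_unique[OF l _ _ _ polar0] by (intro ex1I[of _ H0]) auto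
  assume pd: "t_pd p l (tprod n l (ttrans l A) A)"
  show "\<exists>!P. P \<in> Stiefel n p l \<and> (\<exists>H. t_psd p l H \<and> A = tprod p l P H)"
    using polar0 polar_stiefel_factor_unique[OF l pd _ _ _ polar0] by (intro ex1I[of _ P0]) auto
  show "\<forall>P H. P \<in> Stiefel n p l \<and> t_psd p l H \<and> A = tprod p l P H \<longrightarrow> t_pd p l H"
    using polar_t_pd(2)[OF l pd] by blast
qed

end
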